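(* Let $\Bbbk$ be a field and $\mathcal{C}$ an additive pivotal $\Bbbk$-category in which every indecomposable object is absolutely indecomposable and every element of the radical of the endomorphism ring of an indecomposable object is nilpotent. Let $V$ be an absolutely simple object, fix a decomposition $V\otimes V^*=\bigoplus_{k\in I}W_k$ into indecomposables with inclusions $i_k$, projections $p_k$ and idempotents $e_k=i_kp_k$. Let $j\in I$ be the unique index with $e_j\,\mathrm{coev}_V=\mathrm{coev}_V$ and $j'\in I$ the unique index with $\widetilde{\mathrm{ev}}_V\,e_{j'}=\widetilde{\mathrm{ev}}_V$. Then the following are equivalent: (1) $V$ is right ambidextrous; (2) $j=j'$; (3) $W_j^*\cong W_j$.
   Context: A pivotal $\Bbbk$-category has left duality $(V^*,\mathrm{coev}_V:\mathbb{1}\to V\otimes V^*,\mathrm{ev}_V:V^*\otimes V\to\mathbb{1})$ and compatible right duality $(\widetilde{\mathrm{coev}}_V:\mathbb{1}\to V^*\otimes V,\widetilde{\mathrm{ev}}_V:V\otimes V^*\to\mathbb{1})$; hom-sets are $\Bbbk$-vector spaces with bilinear composition and tensor product, and $\operatorname{End}(\mathbb{1})=\Bbbk$. For $f:V\to W$ the dual is $f^*=(\mathrm{ev}_W\otimes\mathrm{Id}_{V^*})(\mathrm{Id}_{W^*}\otimes f\otimes\mathrm{Id}_{V^*})(\mathrm{Id}_{W^*}\otimes\mathrm{coev}_V)$. Let $\phi_V=(\widetilde{\mathrm{ev}}_V\otimes\mathrm{Id}_{V^{**}})(\mathrm{Id}_V\otimes\mathrm{coev}_{V^*}):V\to V^{**}$.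 An absolutely simple object $V$ (one with $\operatorname{End}(V)=\Bbbk\,\mathrm{Id}_V$) is right ambidextrous if $f\,\mathrm{coev}_V=(\phi_V^{-1}\otimes\mathrm{Id}_{V^*})\,f^*\,\widetilde{\mathrm{coev}}_{V^*}$ for all $f\in\operatorname{End}_{\mathcal{C}}(V\otimes V^* )$. An object is absolutely indecomposable if its endomorphism ring modulo its radical is $\Bbbk$. *)

theory Defs
  imports Main "HOL.Modules"
begin

text \<open>Morphisms live in one
  type 'm (an abelian group), and Hom A B is the set of morphisms A to B;
  all hom-sets contain the common zero and are closed under the group and
  scalar operations of a k-module structure on 'm. Composition and tensor
  product are total operations on 'm; all axioms are relativised to the
  hom-sets. Every k-linear category embeds into this shape (take 'm to be
  the direct sum of all hom-spaces), so no generality is lost.\<close>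

record ('o, 'm, 'k) pcat =
  Hom   :: "'o \<Rightarrow> 'o \<Rightarrow> 'm set"
  cmp   :: "'m \<Rightarrow> 'm \<Rightarrow> 'm"      \<comment> \<open>cmp g f = g after f\<close>
  idm   :: "'o \<Rightarrow> 'm"
  smul  :: "'k \<Rightarrow> 'm \<Rightarrow> 'm"
  tobj  :: "'o \<Rightarrow> 'o \<Rightarrow> 'o"
  tmor  :: "'m \<Rightarrow> 'm \<Rightarrow> 'm"
  unito :: "'o"
  dual  :: "'o \<Rightarrow> 'o"
  ev    :: "'o \<Rightarrow> 'm"     \<comment> \<open>ev V : V* (x) V -> 1\<close>
  coev  :: "'o \<Rightarrow> 'm"     \<comment> \<open>coev V : 1 -> V (x) V*\<close>
  evt   :: "'o \<Rightarrow> 'm"     \<comment> \<open>right evaluation  V (x) V* -> 1\<close>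
  coevt :: "'o \<Rightarrow> 'm"     \<comment> \<open>right coevaluation 1 -> V* (x) V\<close>

text \<open>Dual morphism f* : W* -> V* of f : V -> W (left duality).\<close>
definition dualm :: "('o, 'm, 'k) pcat \<Rightarrow> 'o \<Rightarrow> 'o \<Rightarrow> 'm \<Rightarrow> 'm" where
  "dualm C V W f =
     cmp C (tmor C (ev C W) (idm C (dual C V)))
      (cmp C (tmor C (idm C (dual C W)) (tmor C f (idm C (dual C V))))
             (tmor C (idm C (dual C W)) (coev C V)))"

definition dualm_r :: "('o, 'm, 'k) pcat \<Rightarrow> 'o \<Rightarrow> 'o \<Rightarrow> 'm \<Rightarrow> 'm" where
  "dualm_r C V W f =
     cmp C (tmor C (idm C (dual C V)) (evt C W))
      (cmp C (tmor C (idm C (dual C V)) (tmor C f (idm C (dual C W))))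
             (tmor C (coevt C V) (idm C (dual C W))))"

definition pivotal_kcat :: "('o, 'm::ab_group_add, 'k::field) pcat \<Rightarrow> bool" where
  "pivotal_kcat C \<longleftrightarrow>
    \<comment> \<open>k-linear structure on hom-sets\<close>
    module (smul C) \<and>
    (\<forall>A B. 0 \<in> Hom C A B) \<and>
    (\<forall>A B f g. f \<in> Hom C A B \<longrightarrow> g \<in> Hom C A B \<longrightarrow> f + g \<in> Hom C A B) \<and>
    (\<forall>A B f c. f \<in> Hom C A B \<longrightarrow> smul C c f \<in> Hom C A B) \<and>
    \<comment> \<open>category\<close>
    (\<forall>A. idm C A \<in> Hom C A A) \<and>
    (\<forall>A B D f g. f \<in> Hom C A B \<longrightarrow> g \<in> Hom C B D \<longrightarrow> cmp C g f \<in> Hom C A D) \<and>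
    (\<forall>A B f. f \<in> Hom C A B \<longrightarrow> cmp C f (idm C A) = f \<and> cmp C (idm C B) f = f) \<and>
    (\<forall>A B D E f g h. f \<in> Hom C A B \<longrightarrow> g \<in> Hom C B D \<longrightarrow> h \<in> Hom C D E \<longrightarrow>
        cmp C h (cmp C g f) = cmp C (cmp C h g) f) \<and>
    \<comment> \<open>bilinearity of composition\<close>
    (\<forall>A B D f f' g c. f \<in> Hom C A B \<longrightarrow> f' \<in> Hom C A B \<longrightarrow> g \<in> Hom C B D \<longrightarrow>
        cmp C g (f + f') = cmp C g f + cmp C g f' \<and> cmp C g (smul C c f) = smul C c (cmp C g f)) \<and>
    (\<forall>A B D f g g' c. f \<in> Hom C A B \<longrightarrow> g \<in> Hom C B D \<longrightarrow> g' \<in> Hom C B D \<longrightarrow>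
        cmp C (g + g') f = cmp C g f + cmp C g' f \<and> cmp C (smul C c g) f = smul C c (cmp C g f)) \<and>
    \<comment> \<open>strict monoidal structure\<close>
    (\<forall>A B A' B' f g. f \<in> Hom C A B \<longrightarrow> g \<in> Hom C A' B' \<longrightarrow>
        tmor C f g \<in> Hom C (tobj C A A') (tobj C B B')) \<and>
    (\<forall>A B. tmor C (idm C A) (idm C B) = idm C (tobj C A B)) \<and>
    (\<forall>A B D A' B' D' f g f' g'. f \<in> Hom C A B \<longrightarrow> g \<in> Hom C B D \<longrightarrow>
        f' \<in> Hom C A' B' \<longrightarrow> g' \<in> Hom C B' D' \<longrightarrow>
        tmor C (cmp C g f) (cmp C g' f') = cmp C (tmor C g g') (tmor C f f')) \<and>
    (\<forall>A B A' B' f f' g c. f \<in> Hom C A B \<longrightarrow> f' \<in> Hom C A B \<longrightarrow> g \<in> Hom C A' B' \<longrightarrow>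
        tmor C (f + f') g = tmor C f g + tmor C f' g \<and>
        tmor C g (f + f') = tmor C g f + tmor C g f' \<and>
        tmor C (smul C c f) g = smul C c (tmor C f g) \<and>
        tmor C g (smul C c f) = smul C c (tmor C g f)) \<and>
    (\<forall>A B D. tobj C (tobj C A B) D = tobj C A (tobj C B D)) \<and>
    (\<forall>A. tobj C (unito C) A = A \<and> tobj C A (unito C) = A) \<and>
    (\<forall>A B A' B' A'' B'' f g h. f \<in> Hom C A B \<longrightarrow> g \<in> Hom C A' B' \<longrightarrow> h \<in> Hom C A'' B'' \<longrightarrow>
        tmor C (tmor C f g) h = tmor C f (tmor C g h)) \<and>
    (\<forall>A B f. f \<in> Hom C A B \<longrightarrow>
        tmor C (idm C (unito C)) f = f \<and> tmor C f (idm C (unito C)) = f) \<and>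
    \<comment> \<open>End(1) = k\<close>
    idm C (unito C) \<noteq> 0 \<and>
    (\<forall>f \<in> Hom C (unito C) (unito C). \<exists>c. f = smul C c (idm C (unito C))) \<and>
    \<comment> \<open>left duality\<close>
    (\<forall>V. coev C V \<in> Hom C (unito C) (tobj C V (dual C V)) \<and>
         ev C V \<in> Hom C (tobj C (dual C V) V) (unito C)) \<and>
    (\<forall>V. cmp C (tmor C (idm C V) (ev C V)) (tmor C (coev C V) (idm C V)) = idm C V) \<and>
    (\<forall>V. cmp C (tmor C (ev C V) (idm C (dual C V))) (tmor C (idm C (dual C V)) (coev C V))
          = idm C (dual C V)) \<and>
    \<comment> \<open>right duality\<close>
    (\<forall>V. coevt C V \<in> Hom C (unito C) (tobj C (dual C V) V) \<and>
         evt C V \<in> Hom C (tobj C V (dual C V)) (unito C)) \<and>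
    (\<forall>V. cmp C (tmor C (evt C V) (idm C V)) (tmor C (idm C V) (coevt C V)) = idm C V) \<and>
    (\<forall>V. cmp C (tmor C (idm C (dual C V)) (evt C V)) (tmor C (coevt C V) (idm C (dual C V)))
          = idm C (dual C V)) \<and>
    \<comment> \<open>strict duality on tensor products (both identifications (V W)* = W* V* are identities)\<close>
    (\<forall>V W. dual C (tobj C V W) = tobj C (dual C W) (dual C V)) \<and>
    (\<forall>V W. ev C (tobj C V W) =
        cmp C (ev C W) (tmor C (idm C (dual C W)) (tmor C (ev C V) (idm C W)))) \<and>
    (\<forall>V W. coev C (tobj C V W) =
        cmp C (tmor C (idm C V) (tmor C (coev C W) (idm C (dual C V)))) (coev C V)) \<and>
    (\<forall>V W. evt C (tobj C V W) =
        cmp C (evt C V) (tmor C (idm C V) (tmor C (evt C W) (idm C (dual C V))))) \<and>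
    (\<forall>V W. coevt C (tobj C V W) =
        cmp C (tmor C (idm C (dual C W)) (tmor C (coevt C V) (idm C W))) (coevt C W)) \<and>
    \<comment> \<open>compatibility of the two dualities on morphisms\<close>
    (\<forall>V W f. f \<in> Hom C V W \<longrightarrow> dualm C V W f = dualm_r C V W f)"

definition biproduct :: "('o, 'm::ab_group_add, 'k) pcat \<Rightarrow> 'o \<Rightarrow> 'o \<Rightarrow> 'o \<Rightarrow>
    'm \<Rightarrow> 'm \<Rightarrow> 'm \<Rightarrow> 'm \<Rightarrow> bool" where
  "biproduct C S A B i1 i2 p1 p2 \<longleftrightarrow>
     i1 \<in> Hom C A S \<and> i2 \<in> Hom C B S \<and> p1 \<in> Hom C S A \<and> p2 \<in> Hom C S B \<and>
     cmp C p1 i1 = idm C A \<and> cmp C p2 i2 = idm C B \<and>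
     cmp C p1 i2 = 0 \<and> cmp C p2 i1 = 0 \<and>
     cmp C i1 p1 + cmp C i2 p2 = idm C S"

definition additive_cat :: "('o, 'm::ab_group_add, 'k) pcat \<Rightarrow> bool" where
  "additive_cat C \<longleftrightarrow> (\<exists>Z. idm C Z = 0) \<and>
     (\<forall>A B. \<exists>S i1 i2 p1 p2. biproduct C S A B i1 i2 p1 p2)"

definition decomposition :: "('o, 'm::ab_group_add, 'k) pcat \<Rightarrow> 'o \<Rightarrow> 'i set \<Rightarrow>
    ('i \<Rightarrow> 'o) \<Rightarrow> ('i \<Rightarrow> 'm) \<Rightarrow> ('i \<Rightarrow> 'm) \<Rightarrow> bool" where
  "decomposition C X I W i p \<longleftrightarrow> finite I \<and>
     (\<forall>k\<in>I. i k \<in> Hom C (W k) X \<and> p k \<in> Hom C X (W k) \<and> cmp C (p k) (i k) = idm C (W k)) \<and>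
     (\<forall>k\<in>I. \<forall>l\<in>I. k \<noteq> l \<longrightarrow> cmp C (p k) (i l) = 0) \<and>
     (\<Sum>k\<in>I. cmp C (i k) (p k)) = idm C X"

text \<open>Zero objects are those with identity 0.\<close>
definition indecomposable :: "('o, 'm::ab_group_add, 'k) pcat \<Rightarrow> 'o \<Rightarrow> bool" where
  "indecomposable C W \<longleftrightarrow> idm C W \<noteq> 0 \<and>
     (\<forall>A B i1 i2 p1 p2. biproduct C W A B i1 i2 p1 p2 \<longrightarrow> idm C A = 0 \<or> idm C B = 0)"

definition radical :: "('o, 'm::ab_group_add, 'k) pcat \<Rightarrow> 'o \<Rightarrow> 'm set" where
  "radical C W = {f \<in> Hom C W W. \<forall>g \<in> Hom C W W. \<exists>h \<in> Hom C W W.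
      cmp C h (idm C W - cmp C g f) = idm C W \<and> cmp C (idm C W - cmp C g f) h = idm C W}"

text \<open>End(W)/rad(End W) = k, i.e. k -> End(W)/rad is bijective.\<close>
definition abs_indecomposable :: "('o, 'm::ab_group_add, 'k) pcat \<Rightarrow> 'o \<Rightarrow> bool" where
  "abs_indecomposable C W \<longleftrightarrow> idm C W \<notin> radical C W \<and>
     (\<forall>f \<in> Hom C W W. \<exists>c. f - smul C c (idm C W) \<in> radical C W)"

definition nilpotent_mor :: "('o, 'm::ab_group_add, 'k) pcat \<Rightarrow> 'o \<Rightarrow> 'm \<Rightarrow> bool" where
  "nilpotent_mor C W f \<longleftrightarrow> (\<exists>n. ((cmp C f) ^^ n) (idm C W) = 0)"

definition abs_simple :: "('o, 'm, 'k) pcat \<Rightarrow> 'o \<Rightarrow> bool" where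
  "abs_simple C V \<longleftrightarrow> (\<forall>f \<in> Hom C V V. \<exists>c. f = smul C c (idm C V))"

definition isomorphic :: "('o, 'm, 'k) pcat \<Rightarrow> 'o \<Rightarrow> 'o \<Rightarrow> bool" where
  "isomorphic C A B \<longleftrightarrow> (\<exists>f \<in> Hom C A B. \<exists>g \<in> Hom C B A.
      cmp C g f = idm C A \<and> cmp C f g = idm C B)"

definition inv_mor :: "('o, 'm, 'k) pcat \<Rightarrow> 'o \<Rightarrow> 'o \<Rightarrow> 'm \<Rightarrow> 'm" where
  "inv_mor C A B f = (THE g. g \<in> Hom C B A \<and> cmp C g f = idm C A \<and> cmp C f g = idm C B)"

text \<open>phi V : V -> V**.\<close>
definition phi :: "('o, 'm, 'k) pcat \<Rightarrow> 'o \<Rightarrow> 'm" where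
  "phi C V = cmp C (tmor C (evt C V) (idm C (dual C (dual C V))))
                   (tmor C (idm C V) (coev C (dual C V)))"

definition right_ambidextrous :: "('o, 'm, 'k) pcat \<Rightarrow> 'o \<Rightarrow> bool" where
  "right_ambidextrous C V \<longleftrightarrow>
     (let X = tobj C V (dual C V) in
      \<forall>f \<in> Hom C X X.
        cmp C f (coev C V) =
        cmp C (tmor C (inv_mor C V (dual C (dual C V)) (phi C V)) (idm C (dual C V)))
          (cmp C (dualm C X X f) (coevt C (dual C V))))"

end

theory Submission
  imports Defs
begin

text \<open>
  Since V is absolutely simple, every endomorphism f of V \<otimes> V* acts on
  coev V and on the right evaluation by scalars.  Using the pivotal identity
  \<open>(phi V \<otimes> V*) \<circ> coev V = coevt V*\<close> and the right dual functor, the right-hand side of the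
  ambidexterity condition equals the scalar of evt times coev, so ambidexterity says the two
  scalars agree.  Compressing f to a summand W k gives an endomorphism of W k, which is a
  scalar plus a nilpotent; the two scalars are its eigenvalues on the nonzero components of
  coev and evt.  This gives (1) \<Longleftrightarrow> (2).  For (2) \<Longleftrightarrow> (3) we build an isomorphism
  \<open>W j \<cong> (W j')*\<close> from the dual decomposition (using locality of W j and (W j')*), and show
  that W j occurs only once in the decomposition.
\<close>

locale pivotal =
  fixes C :: "('o, 'm::ab_group_add, 'k::field) pcat"
  assumes pivotal: "pivotal_kcat C"
begin

abbreviation hom where "hom \<equiv> Hom C"
abbreviation comp (infixr "\<cdot>" 80) where "g \<cdot> f \<equiv> cmp C g f"
abbreviation tensor (infixr "\<otimes>" 85) where "f \<otimes> g \<equiv> tmor C f g"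
abbreviation otensor (infixr "\<odot>" 60) where "A \<odot> B \<equiv> tobj C A B"
abbreviation Idm where "Idm \<equiv> idm C"
abbreviation One where "One \<equiv> unito C"
abbreviation dl where "dl \<equiv> dual C"
abbreviation scale (infixr "*\<^sub>s" 75) where "c *\<^sub>s f \<equiv> smul C c f"

lemmas axioms = pivotal[unfolded pivotal_kcat_def]

lemma module: "module (smul C)" using axioms by (elim conjE)
lemma zero_hom[simp]: "0 \<in> hom A B" using axioms by (elim conjE) (simp only:)
lemma add_hom: "f \<in> hom A B \<Longrightarrow> g \<in> hom A B \<Longrightarrow> f + g \<in> hom A B"
  using axioms by (elim conjE) (simp only:)
lemma scale_hom: "f \<in> hom A B \<Longrightarrow> c *\<^sub>s f \<in> hom A B" using axioms by (elim conjE) (simp only:)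
lemma id_hom: "Idm A \<in> hom A A" using axioms by (elim conjE) (simp only:)
lemma comp_hom: "f \<in> hom A B \<Longrightarrow> g \<in> hom B D \<Longrightarrow> g \<cdot> f \<in> hom A D"
  using axioms by (elim conjE) (simp only:)
lemma id_right: "f \<in> hom A B \<Longrightarrow> f \<cdot> Idm A = f" using axioms by (elim conjE) (simp only:)
lemma id_left: "f \<in> hom A B \<Longrightarrow> Idm B \<cdot> f = f" using axioms by (elim conjE) (simp only:)
lemma comp_assoc:
  "f \<in> hom A B \<Longrightarrow> g \<in> hom B D \<Longrightarrow> h \<in> hom D E \<Longrightarrow> h \<cdot> (g \<cdot> f) = (h \<cdot> g) \<cdot> f"
  using axioms by (elim conjE) (simp only:)
lemma comp_add_right:
  "f \<in> hom A B \<Longrightarrow> f' \<in> hom A B \<Longrightarrow> g \<in> hom B D \<Longrightarrow> g \<cdot> (f + f') = g \<cdot> f + g \<cdot> f'"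
  using axioms by (elim conjE) (simp only:)
lemma comp_scale_right: "f \<in> hom A B \<Longrightarrow> g \<in> hom B D \<Longrightarrow> g \<cdot> (c *\<^sub>s f) = c *\<^sub>s (g \<cdot> f)"
  using axioms by (elim conjE) (simp only:)
lemma comp_add_left:
  "f \<in> hom A B \<Longrightarrow> g \<in> hom B D \<Longrightarrow> g' \<in> hom B D \<Longrightarrow> (g + g') \<cdot> f = g \<cdot> f + g' \<cdot> f"
  using axioms by (elim conjE) (simp only:)
lemma comp_scale_left: "f \<in> hom A B \<Longrightarrow> g \<in> hom B D \<Longrightarrow> (c *\<^sub>s g) \<cdot> f = c *\<^sub>s (g \<cdot> f)"
  using axioms by (elim conjE) (simp only:)
lemma tensor_hom: "f \<in> hom A B \<Longrightarrow> g \<in> hom A' B' \<Longrightarrow> f \<otimes> g \<in> hom (A \<odot> A') (B \<odot> B')"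
  using axioms by (elim conjE) (simp only:)
lemma tensor_id: "Idm A \<otimes> Idm B = Idm (A \<odot> B)" using axioms by (elim conjE) (simp only:)
lemma interchange: "f \<in> hom A B \<Longrightarrow> g \<in> hom B D \<Longrightarrow> f' \<in> hom A' B' \<Longrightarrow> g' \<in> hom B' D' \<Longrightarrow>
   (g \<cdot> f) \<otimes> (g' \<cdot> f') = (g \<otimes> g') \<cdot> (f \<otimes> f')"
  using axioms by (elim conjE) (simp only:)
lemma tensor_add_left:
  "f \<in> hom A B \<Longrightarrow> f' \<in> hom A B \<Longrightarrow> g \<in> hom A' B' \<Longrightarrow> (f + f') \<otimes> g = f \<otimes> g + f' \<otimes> g"
  using axioms by (elim conjE) (simp only:)
lemma tensor_add_right:
  "f \<in> hom A B \<Longrightarrow> f' \<in> hom A B \<Longrightarrow> g \<in> hom A' B' \<Longrightarrow> g \<otimes> (f + f') = g \<otimes> f + g \<otimes> f'"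
  using axioms by (elim conjE) (simp only:)
lemma tensor_scale_left: "f \<in> hom A B \<Longrightarrow> g \<in> hom A' B' \<Longrightarrow> (c *\<^sub>s f) \<otimes> g = c *\<^sub>s (f \<otimes> g)"
  using axioms by (elim conjE) (simp only:)
lemma tensor_scale_right: "f \<in> hom A B \<Longrightarrow> g \<in> hom A' B' \<Longrightarrow> g \<otimes> (c *\<^sub>s f) = c *\<^sub>s (g \<otimes> f)"
  using axioms by (elim conjE) (simp only:)
lemma otensor_assoc[simp]: "(A \<odot> B) \<odot> D = A \<odot> (B \<odot> D)" using axioms by (elim conjE) (simp only:)
lemma otensor_unit_left[simp]: "One \<odot> A = A" using axioms by (elim conjE) (simp only:)
lemma otensor_unit_right[simp]: "A \<odot> One = A" using axioms by (elim conjE) (simp only:)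
lemma tensor_assoc:
  "f \<in> hom A B \<Longrightarrow> g \<in> hom A' B' \<Longrightarrow> h \<in> hom A'' B'' \<Longrightarrow> (f \<otimes> g) \<otimes> h = f \<otimes> (g \<otimes> h)"
  using axioms by (elim conjE) (simp only:)
lemma tensor_unit_left: "f \<in> hom A B \<Longrightarrow> Idm One \<otimes> f = f" using axioms by (elim conjE) (simp only:)
lemma tensor_unit_right: "f \<in> hom A B \<Longrightarrow> f \<otimes> Idm One = f" using axioms by (elim conjE) (simp only:)
lemma id_unit_nonzero: "Idm One \<noteq> 0" using axioms by (elim conjE)
lemma end_unit: "f \<in> hom One One \<Longrightarrow> \<exists>c. f = c *\<^sub>s Idm One" using axioms by (elim conjE) (simp only:)
lemma coev_hom: "coev C A \<in> hom One (A \<odot> dl A)" using axioms by (elim conjE) (simp only:)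
lemma ev_hom: "ev C A \<in> hom (dl A \<odot> A) One" using axioms by (elim conjE) (simp only:)
lemma coevt_hom: "coevt C A \<in> hom One (dl A \<odot> A)" using axioms by (elim conjE) (simp only:)
lemma evt_hom: "evt C A \<in> hom (A \<odot> dl A) One" using axioms by (elim conjE) (simp only:)
lemma zigzag_left1: "(Idm A \<otimes> ev C A) \<cdot> (coev C A \<otimes> Idm A) = Idm A"
  using axioms by (elim conjE) (simp only:)
lemma zigzag_left2: "(ev C A \<otimes> Idm (dl A)) \<cdot> (Idm (dl A) \<otimes> coev C A) = Idm (dl A)"
  using axioms by (elim conjE) (simp only:)
lemma zigzag_right1: "(evt C A \<otimes> Idm A) \<cdot> (Idm A \<otimes> coevt C A) = Idm A"
  using axioms by (elim conjE) (simp only:)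
lemma zigzag_right2: "(Idm (dl A) \<otimes> evt C A) \<cdot> (coevt C A \<otimes> Idm (dl A)) = Idm (dl A)"
  using axioms by (elim conjE) (simp only:)
lemma dual_otensor[simp]: "dl (A \<odot> B) = dl B \<odot> dl A" using axioms by (elim conjE) (simp only:)
lemma coev_otensor: "coev C (A \<odot> B) = (Idm A \<otimes> (coev C B \<otimes> Idm (dl A))) \<cdot> coev C A"
  using axioms by (elim conjE) (simp only:)
lemma evt_otensor: "evt C (A \<odot> B) = evt C A \<cdot> (Idm A \<otimes> (evt C B \<otimes> Idm (dl A)))"
  using axioms by (elim conjE) (simp only:)
lemma coevt_otensor: "coevt C (A \<odot> B) = (Idm (dl B) \<otimes> (coevt C A \<otimes> Idm B)) \<cdot> coevt C B"
  using axioms by (elim conjE) (simp only:)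
lemma dualities_compatible: "f \<in> hom A B \<Longrightarrow> dualm C A B f = dualm_r C A B f"
  using axioms by (elim conjE) (simp only:)

text \<open>Typing rules with the objects left flexible, so that they apply up to the strict
  associativity and unit laws (the side conditions are discharged by simp).\<close>

lemma hom_id: "A = X \<Longrightarrow> A = Y \<Longrightarrow> Idm A \<in> hom X Y" using id_hom by simp
lemma hom_comp: "f \<in> hom A B \<Longrightarrow> g \<in> hom B' D \<Longrightarrow> A = X \<Longrightarrow> B = B' \<Longrightarrow> D = Y \<Longrightarrow> g \<cdot> f \<in> hom X Y"
  using comp_hom by blast
lemma hom_tensor: "f \<in> hom A B \<Longrightarrow> g \<in> hom A' B' \<Longrightarrow> A \<odot> A' = X \<Longrightarrow> B \<odot> B' = Y \<Longrightarrow> f \<otimes> g \<in> hom X Y"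
  using tensor_hom by blast
lemma hom_ev: "dl A \<odot> A = X \<Longrightarrow> One = Y \<Longrightarrow> ev C A \<in> hom X Y" using ev_hom by blast
lemma hom_coev: "One = X \<Longrightarrow> A \<odot> dl A = Y \<Longrightarrow> coev C A \<in> hom X Y" using coev_hom by blast
lemma hom_evt: "A \<odot> dl A = X \<Longrightarrow> One = Y \<Longrightarrow> evt C A \<in> hom X Y" using evt_hom by blast
lemma hom_coevt: "One = X \<Longrightarrow> dl A \<odot> A = Y \<Longrightarrow> coevt C A \<in> hom X Y" using coevt_hom by blast

lemmas hom_intros = hom_id hom_comp hom_tensor hom_ev hom_coev hom_evt hom_coevt scale_hom add_hom

lemma id_otensor: "Idm (A \<odot> B) = Idm A \<otimes> Idm B" by (simp add: tensor_id)

lemma id_tensor_comp: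
  assumes "f \<in> hom A B" "g \<in> hom B D" shows "Idm X \<otimes> (g \<cdot> f) = (Idm X \<otimes> g) \<cdot> (Idm X \<otimes> f)"
  using interchange[OF id_hom id_hom assms, of X] id_left[OF id_hom[of X]] by simp

lemma comp_tensor_id:
  assumes "f \<in> hom A B" "g \<in> hom B D" shows "(g \<cdot> f) \<otimes> Idm X = (g \<otimes> Idm X) \<cdot> (f \<otimes> Idm X)"
  using interchange[OF assms id_hom id_hom, of X] id_left[OF id_hom[of X]] by simp

lemma slide_left: "f \<in> hom A B \<Longrightarrow> g \<in> hom A' B' \<Longrightarrow> (f \<otimes> Idm B') \<cdot> (Idm A \<otimes> g) = f \<otimes> g"
  using interchange[OF id_hom _ _ id_hom] by (simp add: id_left id_right)

lemma slide_right: "f \<in> hom A B \<Longrightarrow> g \<in> hom A' B' \<Longrightarrow> (Idm B \<otimes> g) \<cdot> (f \<otimes> Idm A') = f \<otimes> g"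
  using interchange[OF _ id_hom id_hom] by (simp add: id_left id_right)

lemma scale_zero[simp]: "c *\<^sub>s 0 = 0" using module.scale_zero_right[OF module] .
lemma scale_zero_left[simp]: "0 *\<^sub>s x = 0" using module.scale_zero_left[OF module] .
lemma scale_one[simp]: "1 *\<^sub>s x = x" using module.scale_one[OF module] .
lemma scale_scale[simp]: "a *\<^sub>s (b *\<^sub>s x) = (a * b) *\<^sub>s x" using module.scale_scale[OF module] .
lemma scale_diff_left: "(a - b) *\<^sub>s x = a *\<^sub>s x - b *\<^sub>s x"
  using module.scale_left_diff_distrib[OF module] .
lemma scale_minus_left: "(- a) *\<^sub>s x = - (a *\<^sub>s x)" using module.scale_minus_left[OF module] .

lemma scale_cancel: assumes "c *\<^sub>s x = d *\<^sub>s x" "x \<noteq> 0" shows "c = d"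
proof (rule ccontr)
  assume "c \<noteq> d"
  have "(c - d) *\<^sub>s x = 0" using assms(1) by (simp add: scale_diff_left)
  then have "inverse (c - d) *\<^sub>s ((c - d) *\<^sub>s x) = 0" by simp
  then have "x = 0" using \<open>c \<noteq> d\<close> by simp
  then show False using assms(2) by simp
qed

lemma comp_zero_right: "g \<in> hom B D \<Longrightarrow> g \<cdot> 0 = 0"
  using comp_add_right[OF zero_hom zero_hom, of g] by simp
lemma comp_zero_left: "f \<in> hom A B \<Longrightarrow> 0 \<cdot> f = 0"
  using comp_add_left[OF _ zero_hom zero_hom, of f] by simp
lemma tensor_zero_left: "g \<in> hom A' B' \<Longrightarrow> 0 \<otimes> g = 0"
  using tensor_add_left[OF zero_hom zero_hom, of g] by simp

text \<open>This normalisation is what makes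
  the two dualities comparable on morphisms out of the unit.\<close>

lemma dual_unit_square[simp]: "dl One \<odot> dl One = dl One" "dl One \<odot> dl One \<odot> X = dl One \<odot> X"
proof -
  show "dl One \<odot> dl One = dl One" using dual_otensor[of One One] by simp
  then show "dl One \<odot> dl One \<odot> X = dl One \<odot> X" by (metis otensor_assoc)
qed

lemma coev_unit_hom: "coev C One \<in> hom One (dl One)" using coev_hom[of One] by simp
lemma evt_unit_hom: "evt C One \<in> hom (dl One) One" using evt_hom[of One] by simp
lemma ev_unit_hom: "ev C One \<in> hom (dl One) One" using ev_hom[of One] by simp
lemma coevt_unit_hom: "coevt C One \<in> hom One (dl One)" using coevt_hom[of One] by simp

lemma ev_coev_unit: "ev C One \<cdot> coev C One = Idm One"
  using zigzag_left1[of One] tensor_unit_left[OF ev_hom[of One]] tensor_unit_right[OF coev_hom[of One]]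
  by simp

lemma evt_coevt_unit: "evt C One \<cdot> coevt C One = Idm One"
  using zigzag_right1[of One] tensor_unit_right[OF evt_hom[of One]] tensor_unit_left[OF coevt_hom[of One]]
  by simp

lemma coev_ev_unit: "coev C One \<cdot> ev C One = Idm (dl One)"
  using zigzag_left2[of One] slide_left[OF ev_hom[of One] coev_hom[of One]]
    slide_right[OF ev_hom[of One] coev_hom[of One]]
    tensor_unit_right[OF ev_hom[of One]] tensor_unit_left[OF coev_hom[of One]]
  by simp

lemma coev_unit_idem: "coev C One = (coev C One \<otimes> Idm (dl One)) \<cdot> coev C One"
  using coev_otensor[of One One] tensor_unit_left[OF tensor_hom[OF coev_hom[of One] id_hom[of "dl One"]]]
  by simp

lemma evt_unit_idem: "evt C One = evt C One \<cdot> (evt C One \<otimes> Idm (dl One))"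
  using evt_otensor[of One One] tensor_unit_left[OF tensor_hom[OF evt_hom[of One] id_hom[of "dl One"]]]
  by simp

text \<open>The scalar \<open>\<lambda> = evt 1 \<circ> coev 1\<close> is idempotent (from the two idempotence laws above)
  and nonzero (since evt 1 and coev 1 are invertible), hence \<open>\<lambda> = 1\<close>.\<close>

lemma evt_coev_unit: "evt C One \<cdot> coev C One = Idm One"
proof -
  have lH: "evt C One \<cdot> coev C One \<in> hom One One" by (rule hom_intros refl | simp)+
  obtain l where l: "evt C One \<cdot> coev C One = l *\<^sub>s Idm One" using end_unit[OF lH] by blast
  have "evt C One \<cdot> (evt C One \<otimes> Idm (dl One)) \<cdot> (coev C One \<otimes> Idm (dl One)) \<cdot> coev C One
      = evt C One \<cdot> coev C One"
    apply (subst coev_unit_idem[symmetric], subst comp_assoc, (rule hom_intros refl | simp)+)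
    apply (subst evt_unit_idem[symmetric], rule refl)
    done
  then have "evt C One \<cdot> coev C One
      = evt C One \<cdot> (evt C One \<otimes> Idm (dl One)) \<cdot> (coev C One \<otimes> Idm (dl One)) \<cdot> coev C One" ..
  also have "\<dots> = evt C One \<cdot> ((l *\<^sub>s Idm One) \<otimes> Idm (dl One)) \<cdot> coev C One"
    apply (subst (2) comp_assoc, (rule hom_intros refl | simp)+)
    apply (subst comp_tensor_id[symmetric], (rule hom_intros refl | simp)+)
    apply (simp only: l)
    done
  also have "\<dots> = l *\<^sub>s (evt C One \<cdot> coev C One)"
    by (simp add: tensor_scale_left[OF id_hom id_hom] tensor_id comp_scale_left[OF coev_unit_hom id_hom]
        id_left[OF coev_unit_hom] comp_scale_right[OF coev_unit_hom evt_unit_hom])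
  finally have "l *\<^sub>s Idm One = (l * l) *\<^sub>s Idm One" using l by simp
  then have idem: "l = l * l" using scale_cancel id_unit_nonzero by blast
  have "l \<noteq> 0"
  proof
    assume "l = 0"
    then have "evt C One \<cdot> coev C One = 0" using l by simp
    then have "evt C One = 0"
      using coev_ev_unit id_right[OF evt_unit_hom] comp_assoc[OF ev_unit_hom coev_unit_hom evt_unit_hom]
        comp_zero_left[OF ev_unit_hom] by simp
    then show False
      using evt_coevt_unit comp_zero_left[OF coevt_unit_hom] id_unit_nonzero by simp
  qed
  with idem have "l = 1" by (metis mult_cancel_left1)
  with l show ?thesis by simp
qed

text \<open>For an absolutely simple object V, the spaces Hom(1, V \<otimes> V*) and Hom(V \<otimes> V*, 1)
  are spanned by coev and by the right evaluation respectively (both reduce via the zigzag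
  laws to End(V) = k).\<close>

lemma hom_unit_to_pair:
  assumes simple: "abs_simple C V" and hH: "h \<in> hom One (V \<odot> dl V)"
  shows "\<exists>c. h = c *\<^sub>s coev C V"
proof -
  let ?g = "(Idm V \<otimes> ev C V) \<cdot> (h \<otimes> Idm V)"
  have gH: "?g \<in> hom V V" by (rule hom_intros hH refl | simp)+
  obtain c where gc: "?g = c *\<^sub>s Idm V" using simple gH unfolding abs_simple_def by blast
  have "(?g \<otimes> Idm (dl V)) \<cdot> coev C V
      = (Idm V \<otimes> (ev C V \<otimes> Idm (dl V))) \<cdot> (h \<otimes> Idm (V \<odot> dl V)) \<cdot> coev C V"
    apply (subst comp_tensor_id, (rule hom_intros hH refl | simp)+)
    apply (subst tensor_assoc, (rule hom_intros hH refl | simp)+)+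
    apply (subst comp_assoc, (rule hom_intros hH refl | simp)+)+
    by (simp add: id_otensor)
  also have "(h \<otimes> Idm (V \<odot> dl V)) \<cdot> coev C V = (Idm (V \<odot> dl V) \<otimes> coev C V) \<cdot> h"
    using slide_left[OF hH coev_hom] tensor_unit_left[OF coev_hom]
      slide_right[OF hH coev_hom] tensor_unit_right[OF hH] by simp
  also have "(Idm V \<otimes> (ev C V \<otimes> Idm (dl V))) \<cdot> (Idm (V \<odot> dl V) \<otimes> coev C V) \<cdot> h
      = (Idm V \<otimes> ((ev C V \<otimes> Idm (dl V)) \<cdot> (Idm (dl V) \<otimes> coev C V))) \<cdot> h"
    apply (subst comp_assoc, (rule hom_intros hH refl | simp)+)+
    apply (simp add: id_otensor)
    apply (subst tensor_assoc, (rule hom_intros hH refl | simp)+)+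
    apply (subst id_tensor_comp, (rule hom_intros hH refl | simp)+)+
    done
  also have "\<dots> = h" using hH by (simp add: zigzag_left2 id_otensor[symmetric] id_left)
  finally have "h = (?g \<otimes> Idm (dl V)) \<cdot> coev C V" ..
  also have "\<dots> = c *\<^sub>s coev C V" using gc
    by (simp add: tensor_scale_left[OF id_hom id_hom] tensor_id comp_scale_left[OF coev_hom id_hom]
        id_left[OF coev_hom])
  finally show ?thesis by blast
qed

lemma hom_pair_to_unit:
  assumes simple: "abs_simple C V" and hH: "h \<in> hom (V \<odot> dl V) One"
  shows "\<exists>c. h = c *\<^sub>s evt C V"
proof -
  let ?g = "(h \<otimes> Idm V) \<cdot> (Idm V \<otimes> coevt C V)"
  have gH: "?g \<in> hom V V" by (rule hom_intros hH refl | simp)+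
  obtain c where gc: "?g = c *\<^sub>s Idm V" using simple gH unfolding abs_simple_def by blast
  have "evt C V \<cdot> (?g \<otimes> Idm (dl V))
      = (evt C V \<cdot> (h \<otimes> Idm (V \<odot> dl V))) \<cdot> (Idm V \<otimes> (coevt C V \<otimes> Idm (dl V)))"
    apply (subst comp_tensor_id, (rule hom_intros hH refl | simp)+)
    apply (subst tensor_assoc, (rule hom_intros hH refl | simp)+)+
    apply (subst comp_assoc, (rule hom_intros hH refl | simp)+)+
    by (simp add: id_otensor)
  also have "evt C V \<cdot> (h \<otimes> Idm (V \<odot> dl V)) = h \<cdot> (Idm (V \<odot> dl V) \<otimes> evt C V)"
    using slide_right[OF hH evt_hom] tensor_unit_left[OF evt_hom]
      slide_left[OF hH evt_hom] tensor_unit_right[OF hH] by simp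
  also have "(h \<cdot> (Idm (V \<odot> dl V) \<otimes> evt C V)) \<cdot> (Idm V \<otimes> (coevt C V \<otimes> Idm (dl V)))
     = h \<cdot> (Idm V \<otimes> ((Idm (dl V) \<otimes> evt C V) \<cdot> (coevt C V \<otimes> Idm (dl V))))"
    apply (subst comp_assoc[symmetric], (rule hom_intros hH refl | simp)+)+
    apply (simp add: id_otensor)
    apply (subst tensor_assoc, (rule hom_intros hH refl | simp)+)+
    apply (subst id_tensor_comp, (rule hom_intros hH refl | simp)+)+
    done
  also have "\<dots> = h" using hH by (simp add: zigzag_right2 id_otensor[symmetric] id_right)
  finally have "h = evt C V \<cdot> (?g \<otimes> Idm (dl V))" ..
  also have "\<dots> = c *\<^sub>s evt C V" using gc
    by (simp add: tensor_scale_left[OF id_hom id_hom] tensor_id comp_scale_right[OF id_hom evt_hom]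
        id_right[OF evt_hom])
  finally show ?thesis by blast
qed

text \<open>It is characterised by the pairing identity
  \<open>evt A \<circ> (A \<otimes> rdual f) = evt B \<circ> (f \<otimes> B*)\<close>, from which it is a k-linear contravariant functor
  that is bijective on every hom-space.  It transports local endomorphism rings to duals.\<close>

abbreviation rdual where "rdual A B f \<equiv> dualm_r C A B f"

lemma rdual_hom: "f \<in> hom A B \<Longrightarrow> rdual A B f \<in> hom (dl B) (dl A)"
  unfolding dualm_r_def by (rule hom_intros refl | assumption | simp)+

lemma hom_rdual: "f \<in> hom A B \<Longrightarrow> dl B = X \<Longrightarrow> dl A = Y \<Longrightarrow> rdual A B f \<in> hom X Y"
  using rdual_hom by blast

lemma rdual_alt: assumes fH: "f \<in> hom A B"
  shows "rdual A B f = (Idm (dl A) \<otimes> (evt C B \<cdot> (f \<otimes> Idm (dl B)))) \<cdot> (coevt C A \<otimes> Idm (dl B))"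
  unfolding dualm_r_def
  apply (subst id_tensor_comp, (rule hom_intros fH refl | simp)+)
  apply (subst comp_assoc, (rule hom_intros fH refl | simp)+)
  done

lemma rdual_pairing: assumes fH: "f \<in> hom A B"
  shows "evt C A \<cdot> (Idm A \<otimes> rdual A B f) = evt C B \<cdot> (f \<otimes> Idm (dl B))"
proof -
  let ?k = "evt C B \<cdot> (f \<otimes> Idm (dl B))"
  have kH: "?k \<in> hom (A \<odot> dl B) One" by (rule hom_intros fH refl | simp)+
  have "evt C A \<cdot> (Idm A \<otimes> rdual A B f)
      = (evt C A \<cdot> (Idm (A \<odot> dl A) \<otimes> ?k)) \<cdot> (Idm A \<otimes> coevt C A \<otimes> Idm (dl B))"
    apply (simp add: rdual_alt[OF fH])
    apply (subst id_tensor_comp, (rule hom_intros kH fH refl | simp)+)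
    apply (subst comp_assoc, (rule hom_intros kH fH refl | simp)+)
    apply (subst tensor_assoc[where f="Idm A" and g="Idm (dl A)", symmetric],
        (rule hom_intros kH fH refl | simp)+)
    apply (simp add: id_otensor)
    done
  also have "evt C A \<cdot> (Idm (A \<odot> dl A) \<otimes> ?k) = ?k \<cdot> (evt C A \<otimes> Idm (A \<odot> dl B))"
    using slide_left[OF evt_hom[of A] kH] tensor_unit_right[OF evt_hom[of A]]
      slide_right[OF evt_hom[of A] kH] tensor_unit_left[OF kH] by simp
  also have "(?k \<cdot> (evt C A \<otimes> Idm (A \<odot> dl B))) \<cdot> (Idm A \<otimes> coevt C A \<otimes> Idm (dl B))
      = ?k \<cdot> (((evt C A \<otimes> Idm A) \<cdot> (Idm A \<otimes> coevt C A)) \<otimes> Idm (dl B))"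
    apply (subst comp_tensor_id, (rule hom_intros kH fH refl | simp)+)
    apply (subst tensor_assoc[where f="evt C A"], (rule hom_intros kH fH refl | simp)+)
    apply (subst tensor_assoc[where f="Idm A" and g="coevt C A"], (rule hom_intros kH fH refl | simp)+)
    apply (simp add: id_otensor)
    apply (subst comp_assoc, (rule hom_intros kH fH refl | simp)+)
    done
  also have "\<dots> = ?k" using kH by (simp add: zigzag_right1 tensor_id id_right)
  finally show ?thesis .
qed

lemma pairing_reconstruct: assumes xH: "x \<in> hom (dl B) (dl A)"
  shows "x = (Idm (dl A) \<otimes> (evt C A \<cdot> (Idm A \<otimes> x))) \<cdot> (coevt C A \<otimes> Idm (dl B))"
proof -
  have "(Idm (dl A) \<otimes> (evt C A \<cdot> (Idm A \<otimes> x))) \<cdot> (coevt C A \<otimes> Idm (dl B))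
      = (Idm (dl A) \<otimes> evt C A) \<cdot> ((Idm (dl A \<odot> A) \<otimes> x) \<cdot> (coevt C A \<otimes> Idm (dl B)))"
    apply (subst id_tensor_comp, (rule hom_intros xH refl | simp)+)
    apply (subst comp_assoc[symmetric], (rule hom_intros xH refl | simp)+)
    apply (subst tensor_assoc[where f="Idm (dl A)" and g="Idm A", symmetric],
        (rule hom_intros xH refl | simp)+)
    apply (simp add: id_otensor)
    done
  also have "(Idm (dl A \<odot> A) \<otimes> x) \<cdot> (coevt C A \<otimes> Idm (dl B)) = (coevt C A \<otimes> Idm (dl A)) \<cdot> x"
    using slide_right[OF coevt_hom[of A] xH] slide_left[OF coevt_hom[of A] xH]
      tensor_unit_left[OF xH] by simp
  also have "(Idm (dl A) \<otimes> evt C A) \<cdot> ((coevt C A \<otimes> Idm (dl A)) \<cdot> x) = x"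
    by (subst comp_assoc, (rule hom_intros xH refl | simp)+) (simp add: zigzag_right2 id_left[OF xH])
  finally show ?thesis ..
qed

lemma pairing_unique:
  assumes "x \<in> hom (dl B) (dl A)" "y \<in> hom (dl B) (dl A)"
    and "evt C A \<cdot> (Idm A \<otimes> x) = evt C A \<cdot> (Idm A \<otimes> y)"
  shows "x = y"
  using pairing_reconstruct[OF assms(1)] pairing_reconstruct[OF assms(2)] assms(3) by simp

lemma rdual_id: "rdual A A (Idm A) = Idm (dl A)"
  by (rule pairing_unique[OF rdual_hom[OF id_hom] id_hom]) (simp add: rdual_pairing[OF id_hom])

lemma rdual_comp: assumes fH: "f \<in> hom A B" and gH: "g \<in> hom B D"
  shows "rdual A D (g \<cdot> f) = rdual A B f \<cdot> rdual B D g"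
proof (rule pairing_unique)
  show "rdual A D (g \<cdot> f) \<in> hom (dl D) (dl A)" "rdual A B f \<cdot> rdual B D g \<in> hom (dl D) (dl A)"
    by (rule hom_intros fH gH hom_rdual refl | simp)+
  have "evt C A \<cdot> (Idm A \<otimes> (rdual A B f \<cdot> rdual B D g))
      = evt C B \<cdot> (f \<otimes> Idm (dl B)) \<cdot> (Idm A \<otimes> rdual B D g)"
    apply (subst id_tensor_comp, (rule hom_intros fH gH hom_rdual refl | simp)+)
    apply (subst comp_assoc, (rule hom_intros fH gH hom_rdual refl | simp)+)
    apply (subst rdual_pairing[OF fH])
    apply (subst comp_assoc, (rule hom_intros fH gH hom_rdual refl | simp)+)
    done
  also have "(f \<otimes> Idm (dl B)) \<cdot> (Idm A \<otimes> rdual B D g) = (Idm B \<otimes> rdual B D g) \<cdot> (f \<otimes> Idm (dl D))"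
    using slide_left[OF fH rdual_hom[OF gH]] slide_right[OF fH rdual_hom[OF gH]] by simp
  also have "evt C B \<cdot> (Idm B \<otimes> rdual B D g) \<cdot> (f \<otimes> Idm (dl D)) = evt C D \<cdot> ((g \<cdot> f) \<otimes> Idm (dl D))"
    apply (subst comp_assoc, (rule hom_intros fH gH hom_rdual refl | simp)+)
    apply (subst rdual_pairing[OF gH])
    apply (subst comp_tensor_id, (rule hom_intros fH gH refl | simp)+)
    apply (subst comp_assoc, (rule hom_intros fH gH refl | simp)+)
    done
  also have "\<dots> = evt C A \<cdot> (Idm A \<otimes> rdual A D (g \<cdot> f))"
    by (rule rdual_pairing[symmetric], rule comp_hom[OF fH gH])
  finally show "evt C A \<cdot> (Idm A \<otimes> rdual A D (g \<cdot> f)) = evt C A \<cdot> (Idm A \<otimes> (rdual A B f \<cdot> rdual B D g))" ..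
qed

lemma rdual_scale: assumes fH: "f \<in> hom A B" shows "rdual A B (c *\<^sub>s f) = c *\<^sub>s rdual A B f"
proof (rule pairing_unique)
  show "rdual A B (c *\<^sub>s f) \<in> hom (dl B) (dl A)" "c *\<^sub>s rdual A B f \<in> hom (dl B) (dl A)"
    by (rule hom_intros fH hom_rdual refl | simp)+
  show "evt C A \<cdot> (Idm A \<otimes> rdual A B (c *\<^sub>s f)) = evt C A \<cdot> (Idm A \<otimes> (c *\<^sub>s rdual A B f))"
    by (simp add: rdual_pairing[OF scale_hom[OF fH]] rdual_pairing[OF fH]
        tensor_scale_left[OF fH id_hom] comp_scale_right[OF tensor_hom[OF fH id_hom] evt_hom]
        tensor_scale_right[OF rdual_hom[OF fH] id_hom]
        comp_scale_right[OF tensor_hom[OF id_hom rdual_hom[OF fH]] evt_hom])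
qed

lemma rdual_add: assumes fH: "f \<in> hom A B" and gH: "g \<in> hom A B"
  shows "rdual A B (f + g) = rdual A B f + rdual A B g"
proof (rule pairing_unique)
  show "rdual A B (f + g) \<in> hom (dl B) (dl A)" "rdual A B f + rdual A B g \<in> hom (dl B) (dl A)"
    by (rule hom_intros fH gH hom_rdual refl | simp)+
  show "evt C A \<cdot> (Idm A \<otimes> rdual A B (f + g)) = evt C A \<cdot> (Idm A \<otimes> (rdual A B f + rdual A B g))"
    by (simp add: rdual_pairing[OF add_hom[OF fH gH]] rdual_pairing[OF fH] rdual_pairing[OF gH]
        tensor_add_left[OF fH gH id_hom]
        comp_add_right[OF tensor_hom[OF fH id_hom] tensor_hom[OF gH id_hom] evt_hom]
        tensor_add_right[OF rdual_hom[OF fH] rdual_hom[OF gH] id_hom]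
        comp_add_right[OF tensor_hom[OF id_hom rdual_hom[OF fH]] tensor_hom[OF id_hom rdual_hom[OF gH]] evt_hom])
qed

lemma morphism_reconstruct: assumes fH: "f \<in> hom A B"
  shows "f = ((evt C B \<cdot> (f \<otimes> Idm (dl B))) \<otimes> Idm B) \<cdot> (Idm A \<otimes> coevt C B)"
proof -
  have "((evt C B \<cdot> (f \<otimes> Idm (dl B))) \<otimes> Idm B) \<cdot> (Idm A \<otimes> coevt C B)
    = (evt C B \<otimes> Idm B) \<cdot> ((f \<otimes> Idm (dl B \<odot> B)) \<cdot> (Idm A \<otimes> coevt C B))"
    apply (subst comp_tensor_id, (rule hom_intros fH refl | simp)+)
    apply (subst comp_assoc[symmetric], (rule hom_intros fH refl | simp)+)
    apply (subst tensor_assoc[where f=f], (rule hom_intros fH refl | simp)+)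
    apply (simp add: id_otensor)
    done
  also have "(f \<otimes> Idm (dl B \<odot> B)) \<cdot> (Idm A \<otimes> coevt C B) = (Idm B \<otimes> coevt C B) \<cdot> f"
    using slide_left[OF fH coevt_hom[of B]] slide_right[OF fH coevt_hom[of B]]
      tensor_unit_right[OF fH] by simp
  also have "(evt C B \<otimes> Idm B) \<cdot> ((Idm B \<otimes> coevt C B) \<cdot> f) = f"
    by (subst comp_assoc, (rule hom_intros fH refl | simp)+) (simp add: zigzag_right1 id_left[OF fH])
  finally show ?thesis ..
qed

lemma rdual_inj: assumes "f \<in> hom A B" "g \<in> hom A B" and "rdual A B f = rdual A B g"
  shows "f = g"
proof -
  have "evt C B \<cdot> (f \<otimes> Idm (dl B)) = evt C B \<cdot> (g \<otimes> Idm (dl B))"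
    using rdual_pairing[OF assms(1)] rdual_pairing[OF assms(2)] assms(3) by simp
  then show ?thesis
    using morphism_reconstruct[OF assms(1)] morphism_reconstruct[OF assms(2)] by metis
qed

lemma rdual_surj: assumes xH: "x \<in> hom (dl B) (dl A)"
  shows "\<exists>f \<in> hom A B. rdual A B f = x"
proof -
  define k where "k = evt C A \<cdot> (Idm A \<otimes> x)"
  have kH: "k \<in> hom (A \<odot> dl B) One" unfolding k_def by (rule hom_intros xH refl | simp)+
  define f where "f = (k \<otimes> Idm B) \<cdot> (Idm A \<otimes> coevt C B)"
  have fH: "f \<in> hom A B" unfolding f_def by (rule hom_intros kH refl | simp)+
  have "evt C B \<cdot> (f \<otimes> Idm (dl B))
      = (evt C B \<cdot> (k \<otimes> Idm (B \<odot> dl B))) \<cdot> (Idm A \<otimes> coevt C B \<otimes> Idm (dl B))"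
    unfolding f_def
    apply (subst comp_tensor_id, (rule hom_intros kH refl | simp)+)
    apply (subst comp_assoc, (rule hom_intros kH refl | simp)+)
    apply (subst tensor_assoc[where f="k"], (rule hom_intros kH refl | simp)+)
    apply (subst tensor_assoc[where f="Idm A" and g="coevt C B"], (rule hom_intros kH refl | simp)+)
    apply (simp add: id_otensor)
    done
  also have "evt C B \<cdot> (k \<otimes> Idm (B \<odot> dl B)) = k \<cdot> (Idm (A \<odot> dl B) \<otimes> evt C B)"
    using slide_right[OF kH evt_hom[of B]] tensor_unit_left[OF evt_hom[of B]]
      slide_left[OF kH evt_hom[of B]] tensor_unit_right[OF kH] by simp
  also have "(k \<cdot> (Idm (A \<odot> dl B) \<otimes> evt C B)) \<cdot> (Idm A \<otimes> coevt C B \<otimes> Idm (dl B))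
      = k \<cdot> (Idm A \<otimes> ((Idm (dl B) \<otimes> evt C B) \<cdot> (coevt C B \<otimes> Idm (dl B))))"
    apply (subst comp_assoc[symmetric], (rule hom_intros kH refl | simp)+)
    apply (simp add: id_otensor)
    apply (subst tensor_assoc[where f="Idm A" and g="Idm (dl B)"], (rule hom_intros kH refl | simp)+)
    apply (subst id_tensor_comp, (rule hom_intros kH refl | simp)+)
    done
  also have "\<dots> = k" using kH by (simp add: zigzag_right2 id_otensor[symmetric] id_right)
  finally have "evt C B \<cdot> (f \<otimes> Idm (dl B)) = k" .
  then have "rdual A B f = x"
    by (intro pairing_unique[OF rdual_hom[OF fH] xH]) (simp add: rdual_pairing[OF fH] k_def)
  with fH show ?thesis by blast
qed

lemma power_hom: "r \<in> hom X X \<Longrightarrow> (cmp C r ^^ n) (Idm X) \<in> hom X X"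
  by (induction n) (auto intro: id_hom comp_hom)

lemma power_commute: "r \<in> hom X X \<Longrightarrow> (cmp C r ^^ n) (Idm X) \<cdot> r = r \<cdot> (cmp C r ^^ n) (Idm X)"
proof (induction n)
  case 0 then show ?case by (simp add: id_left id_right)
next
  case (Suc n)
  have "(cmp C r ^^ Suc n) (Idm X) \<cdot> r = r \<cdot> ((cmp C r ^^ n) (Idm X) \<cdot> r)"
    using comp_assoc[OF Suc.prems power_hom[OF Suc.prems] Suc.prems] by simp
  then show ?case using Suc.IH Suc.prems by simp
qed

lemma rdual_power:
  "r \<in> hom X X \<Longrightarrow> (cmp C (rdual X X r) ^^ n) (Idm (dl X)) = rdual X X ((cmp C r ^^ n) (Idm X))"
proof (induction n)
  case 0 then show ?case by (simp add: rdual_id)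
next
  case (Suc n)
  then show ?case
    using rdual_comp[OF Suc.prems power_hom[OF Suc.prems]] power_commute[OF Suc.prems] by simp
qed

lemma rdual_nilpotent: "r \<in> hom X X \<Longrightarrow> nilpotent_mor C X r \<Longrightarrow> nilpotent_mor C (dl X) (rdual X X r)"
  unfolding nilpotent_mor_def using rdual_power rdual_scale[OF zero_hom, of X X 0] by (metis scale_zero_left)

text \<open>Two duality pairings for the same object Q give mutually inverse comparison maps between
  their partners P and R (the usual uniqueness of duals).\<close>

lemma comparison_left_inverse:
  assumes e1: "e1 \<in> hom (P \<odot> Q) One" and c1: "c1 \<in> hom One (Q \<odot> P)"
    and e2: "e2 \<in> hom (R \<odot> Q) One" and c2: "c2 \<in> hom One (Q \<odot> R)"
    and z1: "(e1 \<otimes> Idm P) \<cdot> (Idm P \<otimes> c1) = Idm P"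
    and z2: "(Idm Q \<otimes> e2) \<cdot> (c2 \<otimes> Idm Q) = Idm Q"
  shows "((e2 \<otimes> Idm P) \<cdot> (Idm R \<otimes> c1)) \<cdot> ((e1 \<otimes> Idm R) \<cdot> (Idm P \<otimes> c2)) = Idm P"
proof -
  have gH: "Idm R \<otimes> c1 \<in> hom R (R \<odot> Q \<odot> P)" by (rule hom_intros c1 refl | simp)+
  have g'H: "e2 \<otimes> Idm P \<in> hom (R \<odot> Q \<odot> P) P" by (rule hom_intros e2 refl | simp)+
  have s1: "(Idm R \<otimes> c1) \<cdot> (e1 \<otimes> Idm R) = (e1 \<otimes> Idm (R \<odot> Q \<odot> P)) \<cdot> (Idm (P \<odot> Q) \<otimes> (Idm R \<otimes> c1))"
    using slide_right[OF e1 gH] slide_left[OF e1 gH] tensor_unit_left[OF gH] by simp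
  have s2: "(e2 \<otimes> Idm P) \<cdot> (e1 \<otimes> Idm (R \<odot> Q \<odot> P)) = (e1 \<otimes> Idm P) \<cdot> (Idm (P \<odot> Q) \<otimes> (e2 \<otimes> Idm P))"
    using slide_right[OF e1 g'H] slide_left[OF e1 g'H] tensor_unit_left[OF g'H] by simp
  have s3: "(Idm (P \<odot> Q) \<otimes> (Idm R \<otimes> c1)) \<cdot> (Idm P \<otimes> c2) = (Idm P \<otimes> (c2 \<otimes> Idm (Q \<odot> P))) \<cdot> (Idm P \<otimes> c1)"
  proof -
    have cc: "(Idm (Q \<odot> R) \<otimes> c1) \<cdot> c2 = (c2 \<otimes> Idm (Q \<odot> P)) \<cdot> c1"
      using slide_right[OF c2 c1] slide_left[OF c2 c1] tensor_unit_right[OF c2] tensor_unit_left[OF c1]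
      by simp
    have "Idm (P \<odot> Q) \<otimes> (Idm R \<otimes> c1) = Idm P \<otimes> (Idm (Q \<odot> R) \<otimes> c1)"
      apply (simp add: id_otensor)
      apply (subst tensor_assoc[where f="Idm P"], (rule hom_intros c1 refl | simp)+)
      apply (subst tensor_assoc[where f="Idm Q" and g="Idm R", symmetric], (rule hom_intros c1 refl | simp)+)
      done
    then show ?thesis
      apply simp
      apply (subst id_tensor_comp[symmetric], (rule hom_intros c1 c2 refl | simp)+)+
      apply (simp add: cc)
      done
  qed
  have s4: "(Idm (P \<odot> Q) \<otimes> (e2 \<otimes> Idm P)) \<cdot> (Idm P \<otimes> (c2 \<otimes> Idm (Q \<odot> P))) = Idm (P \<odot> Q \<odot> P)"
  proof -
    have "Idm (P \<odot> Q) \<otimes> (e2 \<otimes> Idm P) = Idm P \<otimes> ((Idm Q \<otimes> e2) \<otimes> Idm P)"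
      apply (simp add: id_otensor)
      apply (subst tensor_assoc[where f="Idm P"], (rule hom_intros e2 refl | simp)+)
      apply (subst tensor_assoc[where f="Idm Q", symmetric], (rule hom_intros e2 refl | simp)+)
      done
    moreover have "c2 \<otimes> Idm (Q \<odot> P) = (c2 \<otimes> Idm Q) \<otimes> Idm P"
      by (simp add: id_otensor) (subst tensor_assoc[where f=c2], (rule hom_intros c2 refl | simp)+)
    ultimately show ?thesis
      apply simp
      apply (subst id_tensor_comp[symmetric], (rule hom_intros c2 e2 refl | simp)+)
      apply (subst comp_tensor_id[symmetric], (rule hom_intros c2 e2 refl | simp)+)
      apply (simp add: z2 tensor_id)
      done
  qed
  have "((e2 \<otimes> Idm P) \<cdot> (Idm R \<otimes> c1)) \<cdot> ((e1 \<otimes> Idm R) \<cdot> (Idm P \<otimes> c2))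
      = (e2 \<otimes> Idm P) \<cdot> ((Idm R \<otimes> c1) \<cdot> (e1 \<otimes> Idm R)) \<cdot> (Idm P \<otimes> c2)"
    by (subst comp_assoc, (rule hom_intros c1 c2 e1 e2 refl | simp)+)+
  also have "\<dots> = ((e2 \<otimes> Idm P) \<cdot> (e1 \<otimes> Idm (R \<odot> Q \<odot> P))) \<cdot> (Idm (P \<odot> Q) \<otimes> (Idm R \<otimes> c1)) \<cdot> (Idm P \<otimes> c2)"
    unfolding s1 by (subst comp_assoc[symmetric], (rule hom_intros c1 c2 e1 e2 refl | simp)+)+
  also have "\<dots> = (e1 \<otimes> Idm P) \<cdot> ((Idm (P \<odot> Q) \<otimes> (e2 \<otimes> Idm P)) \<cdot> (Idm P \<otimes> (c2 \<otimes> Idm (Q \<odot> P)))) \<cdot> (Idm P \<otimes> c1)"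
    unfolding s2 s3 by (subst comp_assoc[symmetric], (rule hom_intros c1 c2 e1 e2 refl | simp)+)+
  also have "\<dots> = Idm P"
    unfolding s4 using z1 id_left[OF tensor_hom[OF id_hom c1]] by simp
  finally show ?thesis .
qed

definition phi_inv :: "'o \<Rightarrow> 'm" where
  "phi_inv V = (ev C (dl V) \<otimes> Idm V) \<cdot> (Idm (dl (dl V)) \<otimes> coevt C V)"

lemma phi_hom: "phi C V \<in> hom V (dl (dl V))" unfolding phi_def by (rule hom_intros refl | simp)+
lemma phi_inv_hom: "phi_inv V \<in> hom (dl (dl V)) V" unfolding phi_inv_def by (rule hom_intros refl | simp)+

lemma phi_inv_phi: "phi_inv V \<cdot> phi C V = Idm V"
  unfolding phi_def phi_inv_def
  by (rule comparison_left_inverse[OF evt_hom coevt_hom ev_hom coev_hom zigzag_right1 zigzag_left1])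

lemma phi_phi_inv: "phi C V \<cdot> phi_inv V = Idm (dl (dl V))"
  unfolding phi_def phi_inv_def
  by (rule comparison_left_inverse[OF ev_hom coev_hom evt_hom coevt_hom zigzag_left2 zigzag_right2])

lemma inv_mor_phi: "inv_mor C V (dl (dl V)) (phi C V) = phi_inv V"
  unfolding inv_mor_def
proof (rule the_equality)
  show "phi_inv V \<in> hom (dl (dl V)) V \<and> phi_inv V \<cdot> phi C V = Idm V \<and> phi C V \<cdot> phi_inv V = Idm (dl (dl V))"
    using phi_inv_hom phi_inv_phi phi_phi_inv by blast
  fix g assume g: "g \<in> hom (dl (dl V)) V \<and> g \<cdot> phi C V = Idm V \<and> phi C V \<cdot> g = Idm (dl (dl V))"
  have "g = g \<cdot> (phi C V \<cdot> phi_inv V)" using phi_phi_inv id_right[of g "dl (dl V)" V] g by simp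
  also have "\<dots> = (g \<cdot> phi C V) \<cdot> phi_inv V" using comp_assoc[OF phi_inv_hom phi_hom] g by blast
  finally show "g = phi_inv V" using g id_left[OF phi_inv_hom] by simp
qed

text \<open>It is obtained by computing the dual of
  the right evaluation of V in two ways: with the left duality it is \<open>ev 1 \<otimes> (phi V \<otimes> V*) coev V\<close>,
  with the right duality it is \<open>coevt V* \<otimes> evt 1\<close>; the two duals agree by pivotality.\<close>

lemma phi_coev_expand:
  "(phi C V \<otimes> Idm (dl V)) \<cdot> coev C V
    = (evt C V \<otimes> Idm (dl (dl V) \<odot> dl V)) \<cdot> (Idm V \<otimes> (coev C (dl V) \<otimes> Idm (dl V))) \<cdot> coev C V"
  unfolding phi_def
  apply (subst comp_tensor_id, (rule hom_intros refl | simp)+)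
  apply (subst tensor_assoc[where f="evt C V"], (rule hom_intros refl | simp)+)
  apply (subst tensor_assoc[where f="Idm V"], (rule hom_intros refl | simp)+)
  apply (simp add: id_otensor)
  apply (subst comp_assoc[symmetric], (rule hom_intros refl | simp)+)
  done

lemma dualm_evt: "dualm C (V \<odot> dl V) One (evt C V) = ev C One \<otimes> ((phi C V \<otimes> Idm (dl V)) \<cdot> coev C V)"
proof -
  have TH: "(phi C V \<otimes> Idm (dl V)) \<cdot> coev C V \<in> hom One (dl (dl V) \<odot> dl V)"
    by (rule hom_intros phi_hom refl | simp)+
  have "dualm C (V \<odot> dl V) One (evt C V)
      = (ev C One \<otimes> Idm (dl (dl V) \<odot> dl V)) \<cdot> (Idm (dl One) \<otimes> ((phi C V \<otimes> Idm (dl V)) \<cdot> coev C V))"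
    unfolding dualm_def phi_coev_expand
    apply (subst coev_otensor)
    apply simp
    apply (subst id_tensor_comp[where X="dl One", symmetric], (rule hom_intros refl | simp)+)
    done
  also have "\<dots> = ev C One \<otimes> ((phi C V \<otimes> Idm (dl V)) \<cdot> coev C V)"
    using slide_left[OF ev_unit_hom TH] by simp
  finally show ?thesis .
qed

lemma rdual_evt: "rdual (V \<odot> dl V) One (evt C V) = coevt C (dl V) \<otimes> evt C One"
proof -
  have zig: "(Idm (dl (dl V) \<odot> dl V) \<otimes> evt C V) \<cdot> coevt C (V \<odot> dl V) = coevt C (dl V)"
  proof -
    have "(Idm (dl (dl V) \<odot> dl V) \<otimes> evt C V) \<cdot> coevt C (V \<odot> dl V)
       = (Idm (dl (dl V)) \<otimes> ((Idm (dl V) \<otimes> evt C V) \<cdot> (coevt C V \<otimes> Idm (dl V)))) \<cdot> coevt C (dl V)"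
      apply (subst coevt_otensor)
      apply (simp add: id_otensor)
      apply (subst tensor_assoc[where f="Idm (dl (dl V))"], (rule hom_intros refl | simp)+)
      apply (subst id_tensor_comp, (rule hom_intros refl | simp)+)
      apply (subst comp_assoc, (rule hom_intros refl | simp)+)
      done
    then show ?thesis by (simp add: zigzag_right2 id_otensor[symmetric] id_left[OF coevt_hom])
  qed
  have "rdual (V \<odot> dl V) One (evt C V) = (Idm (dl (dl V) \<odot> dl V) \<otimes> evt C One) \<cdot>
     (((Idm (dl (dl V) \<odot> dl V) \<otimes> evt C V) \<cdot> coevt C (V \<odot> dl V)) \<otimes> Idm (dl One))"
    unfolding dualm_r_def
    apply simp
    apply (subst tensor_assoc[where f="Idm (dl (dl V) \<odot> dl V)", symmetric], (rule hom_intros refl | simp)+)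
    apply (subst comp_tensor_id[where X="dl One"], (rule hom_intros refl | simp)+)
    done
  also have "\<dots> = coevt C (dl V) \<otimes> evt C One"
    unfolding zig using slide_right[OF coevt_hom[of "dl V"] evt_unit_hom] by simp
  finally show ?thesis .
qed

lemma rdual_evt_coev: "rdual (V \<odot> dl V) One (evt C V) \<cdot> coev C One = coevt C (dl V)"
  using interchange[OF id_hom coevt_hom coev_unit_hom evt_unit_hom] evt_coev_unit
    tensor_unit_left[OF coev_unit_hom] id_right[OF coevt_hom] tensor_unit_right[OF coevt_hom]
  by (simp add: rdual_evt)

lemma phi_coev: "(phi C V \<otimes> Idm (dl V)) \<cdot> coev C V = coevt C (dl V)"
proof -
  let ?T = "(phi C V \<otimes> Idm (dl V)) \<cdot> coev C V"
  have TH: "?T \<in> hom One (dl (dl V) \<odot> dl V)" by (rule hom_intros phi_hom refl | simp)+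
  have "(ev C One \<otimes> ?T) \<cdot> coev C One = ?T"
    using interchange[OF coev_unit_hom ev_unit_hom id_hom TH] tensor_unit_right[OF coev_unit_hom]
      ev_coev_unit id_right[OF TH] tensor_unit_left[OF TH] by simp
  then show ?thesis
    using dualities_compatible[OF evt_hom[of V]] dualm_evt rdual_evt_coev by simp
qed

lemma phi_inv_coevt: "(phi_inv V \<otimes> Idm (dl V)) \<cdot> coevt C (dl V) = coev C V"
proof -
  have "(phi_inv V \<otimes> Idm (dl V)) \<cdot> coevt C (dl V)
      = ((phi_inv V \<cdot> phi C V) \<otimes> Idm (dl V)) \<cdot> coev C V"
    unfolding phi_coev[symmetric]
    by (subst comp_assoc[OF coev_hom tensor_hom[OF phi_hom id_hom] tensor_hom[OF phi_inv_hom id_hom]],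
        subst comp_tensor_id[OF phi_hom phi_inv_hom], rule refl)
  then show ?thesis by (simp add: phi_inv_phi tensor_id id_left[OF coev_hom])
qed

text \<open>The right-hand side of the ambidexterity condition, for an endomorphism f of V \<otimes> V*
  with \<open>evt V \<circ> f = c \<cdot> evt V\<close>: it equals \<open>c \<cdot> coev V\<close>.  Thus V is right ambidextrous iff
  every f acts on coev by the same scalar by which it acts on the right evaluation.\<close>

lemma rdual_coevt_scalar:
  assumes fH: "f \<in> hom (V \<odot> dl V) (V \<odot> dl V)" and e: "evt C V \<cdot> f = c *\<^sub>s evt C V"
  shows "rdual (V \<odot> dl V) (V \<odot> dl V) f \<cdot> coevt C (dl V) = c *\<^sub>s coevt C (dl V)"
proof -
  have "rdual (V \<odot> dl V) (V \<odot> dl V) f \<cdot> coevt C (dl V)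
     = (rdual (V \<odot> dl V) (V \<odot> dl V) f \<cdot> rdual (V \<odot> dl V) One (evt C V)) \<cdot> coev C One"
    unfolding rdual_evt_coev[symmetric]
    by (rule comp_assoc) (rule hom_intros hom_rdual fH refl | simp)+
  also have "\<dots> = rdual (V \<odot> dl V) One (c *\<^sub>s evt C V) \<cdot> coev C One"
    using rdual_comp[OF fH evt_hom] e by simp
  also have "\<dots> = c *\<^sub>s coevt C (dl V)"
    using rdual_scale[OF evt_hom] comp_scale_left[OF coev_unit_hom rdual_hom[OF evt_hom]] rdual_evt_coev
    by simp
  finally show ?thesis .
qed

lemma ambidexterity_rhs:
  assumes fH: "f \<in> hom (V \<odot> dl V) (V \<odot> dl V)" and e: "evt C V \<cdot> f = c *\<^sub>s evt C V"
  shows "(inv_mor C V (dl (dl V)) (phi C V) \<otimes> Idm (dl V)) \<cdot>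
           (dualm C (V \<odot> dl V) (V \<odot> dl V) f \<cdot> coevt C (dl V)) = c *\<^sub>s coev C V"
  unfolding inv_mor_phi dualities_compatible[OF fH] rdual_coevt_scalar[OF fH e]
  using comp_scale_right[OF coevt_hom tensor_hom[OF phi_inv_hom id_hom]] phi_inv_coevt by simp

text \<open>Under the hypotheses of the theorem every endomorphism of an
  indecomposable object is a scalar plus a nilpotent element of the radical; the radical
  makes the unipotent part invertible.\<close>

definition invertible_endo :: "'o \<Rightarrow> 'm \<Rightarrow> bool" where
  "invertible_endo X g \<longleftrightarrow> (\<exists>h \<in> hom X X. h \<cdot> g = Idm X \<and> g \<cdot> h = Idm X)"

definition local_endos :: "'o \<Rightarrow> bool" where
  "local_endos X \<longleftrightarrow> (\<forall>g \<in> hom X X. \<exists>\<mu> r. r \<in> hom X X \<and> nilpotent_mor C X r \<and>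
      g = \<mu> *\<^sub>s Idm X + r \<and> invertible_endo X (Idm X + r))"

lemma radical_unipotent_invertible: assumes "r \<in> radical C X" shows "invertible_endo X (Idm X + r)"
proof -
  have rH: "r \<in> hom X X" using assms unfolding radical_def by blast
  have "((-1) *\<^sub>s Idm X) \<cdot> r = - r"
    using comp_scale_left[OF rH id_hom] id_left[OF rH] scale_minus_left[of 1 r] by simp
  then have e: "Idm X - ((-1) *\<^sub>s Idm X) \<cdot> r = Idm X + r" by simp
  obtain h where "h \<in> hom X X" "h \<cdot> (Idm X - ((-1) *\<^sub>s Idm X) \<cdot> r) = Idm X"
      "(Idm X - ((-1) *\<^sub>s Idm X) \<cdot> r) \<cdot> h = Idm X"
    using assms scale_hom[OF id_hom, of "-1" X] unfolding radical_def by blast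
  then show ?thesis unfolding invertible_endo_def e by blast
qed

lemma local_endos_if_abs_indecomposable:
  assumes "abs_indecomposable C X" and "\<forall>f \<in> radical C X. nilpotent_mor C X f"
  shows "local_endos X"
  unfolding local_endos_def
proof
  fix g assume gH: "g \<in> hom X X"
  obtain c where c: "g - c *\<^sub>s Idm X \<in> radical C X"
    using assms(1) gH unfolding abs_indecomposable_def by blast
  then have "g - c *\<^sub>s Idm X \<in> hom X X" unfolding radical_def by blast
  moreover have "g = c *\<^sub>s Idm X + (g - c *\<^sub>s Idm X)" by simp
  ultimately show "\<exists>\<mu> r. r \<in> hom X X \<and> nilpotent_mor C X r \<and> g = \<mu> *\<^sub>s Idm X + r \<and>
      invertible_endo X (Idm X + r)"
    using c assms(2) radical_unipotent_invertible by blast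
qed

text \<open>The right dual is an anti-isomorphism \<open>End(X) \<rightarrow> End(X*)\<close>, so duals of local objects are local.\<close>

lemma rdual_invertible: "g \<in> hom X X \<Longrightarrow> invertible_endo X g \<Longrightarrow> invertible_endo (dl X) (rdual X X g)"
  unfolding invertible_endo_def using rdual_comp rdual_id rdual_hom by metis

lemma local_endos_dual: assumes "local_endos X" shows "local_endos (dl X)"
  unfolding local_endos_def
proof
  fix g' assume "g' \<in> hom (dl X) (dl X)"
  then obtain g where gH: "g \<in> hom X X" and g': "rdual X X g = g'" using rdual_surj by blast
  obtain \<mu> r where rH: "r \<in> hom X X" and nil: "nilpotent_mor C X r"
    and g: "g = \<mu> *\<^sub>s Idm X + r" and inv: "invertible_endo X (Idm X + r)"
    using assms gH unfolding local_endos_def by blast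
  have "g' = \<mu> *\<^sub>s Idm (dl X) + rdual X X r"
    using g' g rdual_add[OF scale_hom[OF id_hom] rH] rdual_scale[OF id_hom] rdual_id by simp
  moreover have "Idm (dl X) + rdual X X r = rdual X X (Idm X + r)"
    using rdual_add[OF id_hom rH] rdual_id by simp
  ultimately show "\<exists>\<mu> r'. r' \<in> hom (dl X) (dl X) \<and> nilpotent_mor C (dl X) r' \<and>
      g' = \<mu> *\<^sub>s Idm (dl X) + r' \<and> invertible_endo (dl X) (Idm (dl X) + r')"
    using rdual_hom[OF rH] rdual_nilpotent[OF rH nil]
      rdual_invertible[OF add_hom[OF id_hom rH] inv] by metis
qed

text \<open>A nilpotent endomorphism has no nonzero eigenvector on either side; hence the scalar
  part \<open>\<mu>\<close> of \<open>\<mu> + r\<close> is its only possible eigenvalue.\<close>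

lemma eigenvalue_right:
  assumes rH: "r \<in> hom X X" and nil: "nilpotent_mor C X r" and uH: "u \<in> hom Y X"
    and "u \<noteq> 0" and eig: "(\<mu> *\<^sub>s Idm X + r) \<cdot> u = l *\<^sub>s u"
  shows "l = \<mu>"
proof -
  have "\<mu> *\<^sub>s u + r \<cdot> u = l *\<^sub>s u"
    using eig comp_add_left[OF uH scale_hom[OF id_hom] rH] comp_scale_left[OF uH id_hom] id_left[OF uH]
    by simp
  then have "r \<cdot> u = l *\<^sub>s u - \<mu> *\<^sub>s u" by (metis add_diff_cancel_left')
  then have ru: "r \<cdot> u = (l - \<mu>) *\<^sub>s u" by (simp add: scale_diff_left)
  have pow: "(cmp C r ^^ n) (Idm X) \<cdot> u = ((l - \<mu>) ^ n) *\<^sub>s u" for n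
  proof (induction n)
    case 0 then show ?case using id_left[OF uH] by simp
  next
    case (Suc n)
    have "(cmp C r ^^ Suc n) (Idm X) \<cdot> u = r \<cdot> ((cmp C r ^^ n) (Idm X) \<cdot> u)"
      using comp_assoc[OF uH power_hom[OF rH] rH] by simp
    then show ?case using Suc comp_scale_right[OF uH rH] ru by (simp add: mult.commute)
  qed
  obtain n where "(cmp C r ^^ n) (Idm X) = 0" using nil unfolding nilpotent_mor_def by blast
  then have "((l - \<mu>) ^ n) *\<^sub>s u = 0 *\<^sub>s u" using pow[of n] comp_zero_left[OF uH] by simp
  then have "(l - \<mu>) ^ n = 0" using scale_cancel \<open>u \<noteq> 0\<close> by blast
  then show ?thesis by simp
qed

lemma eigenvalue_left:
  assumes rH: "r \<in> hom X X" and nil: "nilpotent_mor C X r" and wH: "w \<in> hom X Y"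
    and "w \<noteq> 0" and eig: "w \<cdot> (\<mu> *\<^sub>s Idm X + r) = l *\<^sub>s w"
  shows "l = \<mu>"
proof -
  have "\<mu> *\<^sub>s w + w \<cdot> r = l *\<^sub>s w"
    using eig comp_add_right[OF scale_hom[OF id_hom] rH wH] comp_scale_right[OF id_hom wH] id_right[OF wH]
    by simp
  then have "w \<cdot> r = l *\<^sub>s w - \<mu> *\<^sub>s w" by (metis add_diff_cancel_left')
  then have wr: "w \<cdot> r = (l - \<mu>) *\<^sub>s w" by (simp add: scale_diff_left)
  have pow: "w \<cdot> (cmp C r ^^ n) (Idm X) = ((l - \<mu>) ^ n) *\<^sub>s w" for n
  proof (induction n)
    case 0 then show ?case using id_right[OF wH] by simp
  next
    case (Suc n)
    have "w \<cdot> (cmp C r ^^ Suc n) (Idm X) = (w \<cdot> r) \<cdot> (cmp C r ^^ n) (Idm X)"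
      using comp_assoc[OF power_hom[OF rH] rH wH] by simp
    then show ?case using Suc comp_scale_left[OF power_hom[OF rH] wH] wr by simp
  qed
  obtain n where "(cmp C r ^^ n) (Idm X) = 0" using nil unfolding nilpotent_mor_def by blast
  then have "((l - \<mu>) ^ n) *\<^sub>s w = 0 *\<^sub>s w" using pow[of n] comp_zero_right[OF wH] by simp
  then have "(l - \<mu>) ^ n = 0" using scale_cancel \<open>w \<noteq> 0\<close> by blast
  then show ?thesis by simp
qed

lemma local_fixing_invertible:
  assumes "local_endos X" and gH: "g \<in> hom X X" and uH: "u \<in> hom Y X" and "u \<noteq> 0"
    and fixed: "g \<cdot> u = u"
  shows "invertible_endo X g"
proof -
  obtain \<mu> r where rH: "r \<in> hom X X" and nil: "nilpotent_mor C X r"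
    and g: "g = \<mu> *\<^sub>s Idm X + r" and inv: "invertible_endo X (Idm X + r)"
    using assms(1) gH unfolding local_endos_def by blast
  have "1 = \<mu>" using eigenvalue_right[OF rH nil uH \<open>u \<noteq> 0\<close>] fixed g by simp
  with g inv show ?thesis by simp
qed

lemma isomorphic_if_composites_invertible:
  assumes aH: "a \<in> hom X Y" and bH: "b \<in> hom Y X"
    and ba: "invertible_endo X (b \<cdot> a)" and ab: "invertible_endo Y (a \<cdot> b)"
  shows "isomorphic C X Y"
proof -
  obtain h where hH: "h \<in> hom X X" and h: "h \<cdot> (b \<cdot> a) = Idm X"
    using ba unfolding invertible_endo_def by blast
  obtain k where kH: "k \<in> hom Y Y" and k: "(a \<cdot> b) \<cdot> k = Idm Y"
    using ab unfolding invertible_endo_def by blast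
  have "h \<cdot> b = (h \<cdot> b) \<cdot> ((a \<cdot> b) \<cdot> k)" using k id_right[OF comp_hom[OF bH hH]] by simp
  also have "\<dots> = (h \<cdot> (b \<cdot> a)) \<cdot> (b \<cdot> k)"
    by (subst comp_assoc[symmetric], (rule hom_intros aH bH hH kH refl | simp)+)+
  finally have hb: "h \<cdot> b = b \<cdot> k" using h id_left[OF comp_hom[OF kH bH]] by simp
  have "a \<cdot> (h \<cdot> b) = Idm Y" using hb k comp_assoc[OF kH bH aH] by simp
  moreover have "(h \<cdot> b) \<cdot> a = Idm X" using h comp_assoc[OF aH bH hH] by simp
  ultimately show ?thesis unfolding isomorphic_def using aH comp_hom[OF bH hH] by blast
qed

lemma isomorphic_sym: "isomorphic C A B \<Longrightarrow> isomorphic C B A" unfolding isomorphic_def by blast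

lemma isomorphic_trans: assumes "isomorphic C A B" "isomorphic C B D" shows "isomorphic C A D"
proof -
  obtain f g where f: "f \<in> hom A B" "g \<in> hom B A" "g \<cdot> f = Idm A" "f \<cdot> g = Idm B"
    using assms(1) unfolding isomorphic_def by blast
  obtain f' g' where f': "f' \<in> hom B D" "g' \<in> hom D B" "g' \<cdot> f' = Idm B" "f' \<cdot> g' = Idm D"
    using assms(2) unfolding isomorphic_def by blast
  have "(g \<cdot> g') \<cdot> (f' \<cdot> f) = g \<cdot> ((g' \<cdot> f') \<cdot> f)"
    by (subst comp_assoc[symmetric], (rule hom_intros f f' refl | simp)+)+
  then have 1: "(g \<cdot> g') \<cdot> (f' \<cdot> f) = Idm A" using f f' id_left by simp
  have "(f' \<cdot> f) \<cdot> (g \<cdot> g') = f' \<cdot> ((f \<cdot> g) \<cdot> g')"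
    by (subst comp_assoc[symmetric], (rule hom_intros f f' refl | simp)+)+
  then have 2: "(f' \<cdot> f) \<cdot> (g \<cdot> g') = Idm D" using f f' id_left by simp
  show ?thesis unfolding isomorphic_def using 1 2 comp_hom f f' by blast
qed

text \<open>The right dual reflects isomorphisms, being full and faithful.\<close>

lemma isomorphic_if_duals: assumes "isomorphic C (dl A) (dl B)" shows "isomorphic C B A"
proof -
  obtain s s' where s: "s \<in> hom (dl A) (dl B)" "s' \<in> hom (dl B) (dl A)"
    "s' \<cdot> s = Idm (dl A)" "s \<cdot> s' = Idm (dl B)"
    using assms unfolding isomorphic_def by blast
  obtain t where t: "t \<in> hom B A" "rdual B A t = s" using rdual_surj[OF s(1)] by blast
  obtain t' where t': "t' \<in> hom A B" "rdual A B t' = s'" using rdual_surj[OF s(2)] by blast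
  have "rdual B B (t' \<cdot> t) = rdual B B (Idm B)" using rdual_comp[OF t(1) t'(1)] t t' s rdual_id by simp
  then have 1: "t' \<cdot> t = Idm B" using rdual_inj[OF comp_hom[OF t(1) t'(1)] id_hom] by blast
  have "rdual A A (t \<cdot> t') = rdual A A (Idm A)" using rdual_comp[OF t'(1) t(1)] t t' s rdual_id by simp
  then have 2: "t \<cdot> t' = Idm A" using rdual_inj[OF comp_hom[OF t'(1) t(1)] id_hom] by blast
  show ?thesis unfolding isomorphic_def using t(1) t'(1) 1 2 by blast
qed

end

locale decomposed_pair = pivotal C for C :: "('o, 'm::ab_group_add, 'k::field) pcat" +
  fixes V :: 'o and I :: "'i set" and W :: "'i \<Rightarrow> 'o" and i p :: "'i \<Rightarrow> 'm" and j j' :: 'i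
  assumes simple: "abs_simple C V"
    and decomp: "decomposition C (V \<odot> dl V) I W i p"
    and summands_local: "\<forall>k\<in>I. local_endos (W k)"
    and summands_nonzero: "\<forall>k\<in>I. Idm (W k) \<noteq> 0"
    and j_in: "j \<in> I" and coev_in_j: "(i j \<cdot> p j) \<cdot> coev C V = coev C V"
    and j'_in: "j' \<in> I" and evt_in_j': "evt C V \<cdot> (i j' \<cdot> p j') = evt C V"
begin

lemma incl_hom: "k \<in> I \<Longrightarrow> i k \<in> hom (W k) (V \<odot> dl V)" using decomp unfolding decomposition_def by blast
lemma proj_hom: "k \<in> I \<Longrightarrow> p k \<in> hom (V \<odot> dl V) (W k)" using decomp unfolding decomposition_def by blast
lemma proj_incl: "k \<in> I \<Longrightarrow> p k \<cdot> i k = Idm (W k)" using decomp unfolding decomposition_def by blast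
lemma proj_incl_other: "k \<in> I \<Longrightarrow> l \<in> I \<Longrightarrow> k \<noteq> l \<Longrightarrow> p k \<cdot> i l = 0"
  using decomp unfolding decomposition_def by blast

lemmas ij = incl_hom[OF j_in] and pj = proj_hom[OF j_in]
  and ij' = incl_hom[OF j'_in] and pj' = proj_hom[OF j'_in]

text \<open>Non-degeneracy: V is nonzero, hence so are coev V, evt V, and their components
  \<open>u = p j \<circ> coev V\<close> and \<open>w = evt V \<circ> i j'\<close> on the distinguished summands.\<close>

lemma id_V_nonzero: "Idm V \<noteq> 0"
proof
  assume "Idm V = 0"
  then have "Idm (V \<odot> dl V) = 0" using tensor_zero_left[OF id_hom] by (simp add: id_otensor)
  then have "Idm (W j) = 0"
    using proj_incl[OF j_in] id_left[OF ij] comp_zero_left[OF ij] comp_zero_right[OF pj] by simp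
  then show False using summands_nonzero j_in by blast
qed

lemma coev_nonzero: "coev C V \<noteq> 0"
proof
  assume "coev C V = 0"
  then have "Idm V = 0"
    using zigzag_left1[of V] tensor_zero_left[OF id_hom] comp_zero_right[OF tensor_hom[OF id_hom ev_hom]]
    by simp
  then show False using id_V_nonzero by simp
qed

lemma evt_nonzero: "evt C V \<noteq> 0"
proof
  assume "evt C V = 0"
  then have "Idm V = 0"
    using zigzag_right1[of V] tensor_zero_left[OF id_hom] comp_zero_left[OF tensor_hom[OF id_hom coevt_hom]]
    by simp
  then show False using id_V_nonzero by simp
qed

lemma coev_component_nonzero: "p j \<cdot> coev C V \<noteq> 0"
proof
  assume "p j \<cdot> coev C V = 0"
  then have "coev C V = 0" using coev_in_j comp_assoc[OF coev_hom pj ij] comp_zero_right[OF ij] by simp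
  then show False using coev_nonzero by simp
qed

lemma evt_component_nonzero: "evt C V \<cdot> i j' \<noteq> 0"
proof
  assume "evt C V \<cdot> i j' = 0"
  then have "evt C V = 0" using evt_in_j' comp_assoc[OF pj' ij' evt_hom] comp_zero_left[OF pj'] by simp
  then show False using evt_nonzero by simp
qed

text \<open>(1) \<Longrightarrow> (2): applied to the idempotent \<open>e j\<close>, ambidexterity forces \<open>evt V \<circ> e j \<noteq> 0\<close>, which
  fails unless j = j'.\<close>

lemma ambidextrous_imp_same_summand:
  assumes amb: "right_ambidextrous C V" shows "j = j'"
proof (rule ccontr)
  assume ne: "j \<noteq> j'"
  have eH: "i j \<cdot> p j \<in> hom (V \<odot> dl V) (V \<odot> dl V)" by (rule comp_hom[OF pj ij])
  have "(evt C V \<cdot> i j') \<cdot> (p j' \<cdot> i j) \<cdot> p j = (evt C V \<cdot> (i j' \<cdot> p j')) \<cdot> (i j \<cdot> p j)"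
    by (subst comp_assoc[symmetric], (rule hom_intros ij pj ij' pj' refl | simp)+)+
  then have "evt C V \<cdot> (i j \<cdot> p j) = (evt C V \<cdot> i j') \<cdot> (p j' \<cdot> i j) \<cdot> p j"
    using evt_in_j' by simp
  also have "\<dots> = 0 *\<^sub>s evt C V"
    using proj_incl_other[OF j'_in j_in] ne comp_zero_left[OF pj] comp_zero_right[OF comp_hom[OF ij' evt_hom]]
    by simp
  finally have evt_e: "evt C V \<cdot> (i j \<cdot> p j) = 0 *\<^sub>s evt C V" .
  have "(i j \<cdot> p j) \<cdot> coev C V = (inv_mor C V (dl (dl V)) (phi C V) \<otimes> Idm (dl V)) \<cdot>
      (dualm C (V \<odot> dl V) (V \<odot> dl V) (i j \<cdot> p j) \<cdot> coevt C (dl V))"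
    using amb eH unfolding right_ambidextrous_def Let_def by blast
  also have "\<dots> = 0 *\<^sub>s coev C V" by (rule ambidexterity_rhs[OF eH evt_e])
  finally show False using coev_in_j coev_nonzero by simp
qed

text \<open>(2) \<Longrightarrow> (1): an endomorphism f of V \<otimes> V* acts on coev and on evt by scalars; both scalars
  are eigenvalues of its compression \<open>p j \<circ> f \<circ> i j\<close> to the local summand W j, on the
  vectors u and w, so they coincide.\<close>

lemma same_summand_imp_ambidextrous:
  assumes jj: "j = j'" shows "right_ambidextrous C V"
  unfolding right_ambidextrous_def Let_def
proof
  fix f assume fH: "f \<in> hom (V \<odot> dl V) (V \<odot> dl V)"
  obtain c where c: "evt C V \<cdot> f = c *\<^sub>s evt C V"
    using hom_pair_to_unit[OF simple comp_hom[OF fH evt_hom]] by blast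
  obtain a where a: "f \<cdot> coev C V = a *\<^sub>s coev C V"
    using hom_unit_to_pair[OF simple comp_hom[OF coev_hom fH]] by blast
  have gH: "p j \<cdot> f \<cdot> i j \<in> hom (W j) (W j)" by (rule hom_intros fH ij pj refl | simp)+
  obtain \<mu> r where rH: "r \<in> hom (W j) (W j)" and nil: "nilpotent_mor C (W j) r"
    and g: "p j \<cdot> f \<cdot> i j = \<mu> *\<^sub>s Idm (W j) + r"
    using summands_local j_in gH unfolding local_endos_def by blast
  have "(p j \<cdot> f \<cdot> i j) \<cdot> (p j \<cdot> coev C V) = p j \<cdot> f \<cdot> ((i j \<cdot> p j) \<cdot> coev C V)"
    by (subst comp_assoc[symmetric], (rule hom_intros fH ij pj refl | simp)+)+
  also have "\<dots> = a *\<^sub>s (p j \<cdot> coev C V)" using coev_in_j a comp_scale_right[OF coev_hom pj] by simp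
  finally have "a = \<mu>"
    using eigenvalue_right[OF rH nil comp_hom[OF coev_hom pj] coev_component_nonzero] g by simp
  have "(evt C V \<cdot> i j) \<cdot> (p j \<cdot> f \<cdot> i j) = (evt C V \<cdot> (i j \<cdot> p j)) \<cdot> f \<cdot> i j"
    by (subst comp_assoc[symmetric], (rule hom_intros fH ij pj refl | simp)+)+
  also have "\<dots> = c *\<^sub>s (evt C V \<cdot> i j)"
    using jj evt_in_j' c comp_assoc[OF ij fH evt_hom] comp_scale_left[OF ij evt_hom] by simp
  finally have "c = \<mu>"
    using eigenvalue_left[OF rH nil comp_hom[OF ij evt_hom]] evt_component_nonzero jj g by simp
  show "f \<cdot> coev C V = (inv_mor C V (dl (dl V)) (phi C V) \<otimes> Idm (dl V)) \<cdot>
      (dualm C (V \<odot> dl V) (V \<odot> dl V) f \<cdot> coevt C (dl V))"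
    using ambidexterity_rhs[OF fH c] a \<open>a = \<mu>\<close> \<open>c = \<mu>\<close> by simp
qed

text \<open>Dualising the decomposition, \<open>rdual (i j')\<close> and \<open>rdual (p j')\<close>
  split off \<open>(W j')*\<close> from \<open>(V \<otimes> V*)* = V** \<otimes> V*\<close>, and this summand carries coevt V*, the image
  of coev V under \<open>phi V \<otimes> V*\<close>.  The maps \<open>a : W j \<rightarrow> (W j')*\<close> and \<open>b\<close> back, passing through \<open>phi V \<otimes> V*\<close>
  and its inverse, have composites fixing the nonzero vectors \<open>p j \<circ> coev V\<close> and
  \<open>rdual (i j') \<circ> coevt V*\<close>; in the local rings of W j and (W j')* they are therefore invertible.\<close>

lemma dual_summand_carries_coevt:
  "(rdual (V \<odot> dl V) (W j') (p j') \<cdot> rdual (W j') (V \<odot> dl V) (i j')) \<cdot> coevt C (dl V) = coevt C (dl V)"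
  using rdual_comp[OF pj' ij'] rdual_coevt_scalar[OF comp_hom[OF pj' ij'], of 1] evt_in_j' by simp

lemma dual_coevt_component_nonzero: "rdual (W j') (V \<odot> dl V) (i j') \<cdot> coevt C (dl V) \<noteq> 0"
proof
  assume "rdual (W j') (V \<odot> dl V) (i j') \<cdot> coevt C (dl V) = 0"
  then have "coevt C (dl V) = 0"
    using dual_summand_carries_coevt
      comp_assoc[OF coevt_hom rdual_hom[OF ij', simplified] rdual_hom[OF pj', simplified]]
      comp_zero_right[OF rdual_hom[OF pj']] by simp
  then have "coev C V = (phi_inv V \<otimes> Idm (dl V)) \<cdot> 0" using phi_inv_coevt[of V] by simp
  then have "coev C V = 0" using comp_zero_right[OF tensor_hom[OF phi_inv_hom id_hom]] by simp
  then show False using coev_nonzero by simp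
qed

lemma summand_iso_dual: "isomorphic C (W j) (dl (W j'))"
proof -
  let ?psi = "phi_inv V \<otimes> Idm (dl V)" and ?psi' = "phi C V \<otimes> Idm (dl V)"
  let ?is = "rdual (W j') (V \<odot> dl V) (i j')" and ?ps = "rdual (V \<odot> dl V) (W j') (p j')"
  let ?a = "?is \<cdot> ?psi' \<cdot> i j" and ?b = "p j \<cdot> ?psi \<cdot> ?ps"
  have isH: "?is \<in> hom (dl (dl V) \<odot> dl V) (dl (W j'))" using rdual_hom[OF ij'] by simp
  have psH: "?ps \<in> hom (dl (W j')) (dl (dl V) \<odot> dl V)" using rdual_hom[OF pj'] by simp
  have aH: "?a \<in> hom (W j) (dl (W j'))" by (rule hom_intros isH ij phi_hom refl | simp)+
  have bH: "?b \<in> hom (dl (W j')) (W j)" by (rule hom_intros psH pj phi_inv_hom refl | simp)+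
  have "(?b \<cdot> ?a) \<cdot> (p j \<cdot> coev C V) = p j \<cdot> ?psi \<cdot> ((?ps \<cdot> ?is) \<cdot> (?psi' \<cdot> ((i j \<cdot> p j) \<cdot> coev C V)))"
    by (subst comp_assoc[symmetric], (rule hom_intros isH psH ij pj phi_hom phi_inv_hom refl | simp)+)+
  then have ba: "(?b \<cdot> ?a) \<cdot> (p j \<cdot> coev C V) = p j \<cdot> coev C V"
    unfolding coev_in_j phi_coev dual_summand_carries_coevt phi_inv_coevt .
  have "(?a \<cdot> ?b) \<cdot> (?is \<cdot> coevt C (dl V))
      = ?is \<cdot> (?psi' \<cdot> ((i j \<cdot> p j) \<cdot> (?psi \<cdot> ((?ps \<cdot> ?is) \<cdot> coevt C (dl V)))))"
    by (subst comp_assoc[symmetric], (rule hom_intros isH psH ij pj phi_hom phi_inv_hom refl | simp)+)+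
  then have ab: "(?a \<cdot> ?b) \<cdot> (?is \<cdot> coevt C (dl V)) = ?is \<cdot> coevt C (dl V)"
    unfolding dual_summand_carries_coevt phi_inv_coevt coev_in_j phi_coev .
  have "local_endos (W j)" and "local_endos (dl (W j'))"
    using summands_local j_in j'_in local_endos_dual by auto
  show ?thesis
  proof (rule isomorphic_if_composites_invertible[OF aH bH])
    show "invertible_endo (W j) (?b \<cdot> ?a)"
      by (rule local_fixing_invertible[OF \<open>local_endos (W j)\<close> comp_hom[OF aH bH]
            comp_hom[OF coev_hom pj] coev_component_nonzero ba])
    show "invertible_endo (dl (W j')) (?a \<cdot> ?b)"
      by (rule local_fixing_invertible[OF \<open>local_endos (dl (W j'))\<close> comp_hom[OF bH aH]
            comp_hom[OF coevt_hom isH] dual_coevt_component_nonzero ab])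
  qed
qed

text \<open>W j occurs only once in the decomposition: an isomorphic summand W k would receive the
  nonzero component of coev V, but coev V has no component outside W j.\<close>

lemma summand_multiplicity_one: assumes kI: "k \<in> I" and iso: "isomorphic C (W j) (W k)" shows "k = j"
proof (rule ccontr)
  assume ne: "k \<noteq> j"
  obtain f g where f: "f \<in> hom (W j) (W k)" "g \<in> hom (W k) (W j)" "g \<cdot> f = Idm (W j)"
    using iso unfolding isomorphic_def by blast
  have ik: "i k \<in> hom (W k) (V \<odot> dl V)" and pk: "p k \<in> hom (V \<odot> dl V) (W k)"
    using incl_hom proj_hom kI by auto
  have uH: "p j \<cdot> coev C V \<in> hom One (W j)" by (rule comp_hom[OF coev_hom pj])
  obtain \<kappa> where \<kappa>: "i k \<cdot> f \<cdot> (p j \<cdot> coev C V) = \<kappa> *\<^sub>s coev C V"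
    using hom_unit_to_pair[OF simple] comp_hom[OF comp_hom[OF uH f(1)] ik] by blast
  have "(p k \<cdot> i j) \<cdot> (p j \<cdot> coev C V) = p k \<cdot> ((i j \<cdot> p j) \<cdot> coev C V)"
    by (subst comp_assoc[symmetric], (rule hom_intros pk ij pj refl | simp)+)+
  then have pkc: "p k \<cdot> coev C V = 0"
    using coev_in_j proj_incl_other[OF kI j_in ne] comp_zero_left[OF uH] by simp
  have "f \<cdot> (p j \<cdot> coev C V) = (p k \<cdot> i k) \<cdot> f \<cdot> (p j \<cdot> coev C V)"
    using proj_incl[OF kI] id_left[OF comp_hom[OF uH f(1)]] by simp
  also have "\<dots> = p k \<cdot> (i k \<cdot> f \<cdot> (p j \<cdot> coev C V))"
    by (subst comp_assoc[symmetric], (rule hom_intros pk ik f uH refl | simp)+)+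
  also have "\<dots> = 0" unfolding \<kappa> using comp_scale_right[OF coev_hom pk] pkc by simp
  finally have "(g \<cdot> f) \<cdot> (p j \<cdot> coev C V) = 0"
    using comp_assoc[OF uH f(1) f(2)] comp_zero_right[OF f(2)] by simp
  then show False using f(3) id_left[OF uH] coev_component_nonzero by simp
qed

lemma same_summand_iff_self_dual: "j = j' \<longleftrightarrow> isomorphic C (dl (W j)) (W j)"
proof
  assume "j = j'"
  then show "isomorphic C (dl (W j)) (W j)" using summand_iso_dual isomorphic_sym by simp
next
  assume "isomorphic C (dl (W j)) (W j)"
  then have "isomorphic C (dl (W j)) (dl (W j'))" using summand_iso_dual isomorphic_trans by blast
  then have "isomorphic C (W j) (W j')" using isomorphic_if_duals isomorphic_sym by blast
  then show "j = j'" using summand_multiplicity_one[OF j'_in] by simp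
qed

end

theorem theorem3p3:
  fixes C :: "('o, 'm::ab_group_add, 'k::field) pcat"
    and V :: 'o and I :: "'i set" and W :: "'i \<Rightarrow> 'o"
    and i p :: "'i \<Rightarrow> 'm" and j j' :: 'i
  assumes "pivotal_kcat C" and "additive_cat C"
    and "\<forall>X. indecomposable C X \<longrightarrow> abs_indecomposable C X"
    and "\<forall>X. indecomposable C X \<longrightarrow> (\<forall>f \<in> radical C X. nilpotent_mor C X f)"
    and "abs_simple C V"
    and "decomposition C (tobj C V (dual C V)) I W i p"
    and "\<forall>k\<in>I. indecomposable C (W k)"
    and "j \<in> I" and "cmp C (cmp C (i j) (p j)) (coev C V) = coev C V"
    and "j' \<in> I" and "cmp C (evt C V) (cmp C (i j') (p j')) = evt C V"
  shows "(right_ambidextrous C V \<longleftrightarrow> j = j') \<and>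
         (j = j' \<longleftrightarrow> isomorphic C (dual C (W j)) (W j))"
proof -
  interpret pivotal C by unfold_locales (fact assms(1))
  have "\<forall>k\<in>I. local_endos (W k)"
    using assms(3,4,7) local_endos_if_abs_indecomposable by blast
  moreover have "\<forall>k\<in>I. idm C (W k) \<noteq> 0"
    using assms(7) unfolding indecomposable_def by blast
  ultimately interpret decomposed_pair C V I W i p j j'
    using assms by unfold_locales auto
  show ?thesis
    using ambidextrous_imp_same_summand same_summand_imp_ambidextrous same_summand_iff_self_dual by blast
qed

end
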